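(* Suppose $\tau\in W^{1,\infty}((0,L);S^{n-1})$ satisfies (C), and let $k=K_\infty(\tau)$. If there exist $u\in W^{1,\infty}((0,L);\mathbb{R}^n)\setminus\{0\}$ and $\lambda\in\mathbb{R}^n$ such that \[ u'+(u\cdot\tau')\tau=\beta\bigl(\lambda-(\lambda\cdot\tau)\tau\bigr),\qquad |u|\,\tau'=k\,u \] hold almost everywhere in $(0,L)$, then $\tau$ is a pseudo-minimiser of $K_\infty$. If in addition $k|u|+\beta\,\lambda\cdot\tau\le0$ on $[0,L]$, then $\tau$ minimises $K_\infty$ among all $\tilde\tau\in W^{1,\infty}((0,L);S^{n-1})$ satisfying (C).
   Context: Standing setup: $n\ge2$, $\ell>0$, $\alpha\colon[0,\ell]\to(0,\infty)$ of bounded variation with $1/\alpha$ bounded; $\psi(s)=\int_0^sd\sigma/\alpha(\sigma)$, $L=\psi(\ell)$, $\phi=\psi^{-1}$, $\beta=\alpha\circ\phi$. Fix $a_1,a_2\in\mathbb{R}^n$, $T_1,T_2\in S^{n-1}$, $a=a_2-a_1$. Constraints (C) on $\tau\colon[0,L]\to S^{n-1}$: $\tau(0)=T_1$, $\tau(L)=T_2$, $\int_0^L\beta\tau\,dt=a$. $K_\infty(\tau)=\operatorname{ess\,sup}|\tau'|$. A map $\tau\in W^{1,\infty}((0,L);S^{n-1})$ satisfying (C) is a pseudo-minimiser of $K_\infty$ if there exists $m\in\mathbb{R}$ with $K_\infty(\tau)\le K_\infty(\tilde\tau)+\frac m{2L}\int_0^L\beta|\tilde\tau-\tau|^2\,dt$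 for all $\tilde\tau\in W^{1,\infty}((0,L);S^{n-1})$ satisfying (C). *)

theory Defs
  imports "HOL-Analysis.Analysis" "HOL-Probability.Essential_Supremum"
begin

definition bounded_variation_on :: "(real \<Rightarrow> real) \<Rightarrow> real \<Rightarrow> real \<Rightarrow> bool" where
  "bounded_variation_on f a b \<longleftrightarrow>
     (\<exists>B. \<forall>xs. sorted xs \<longrightarrow> set xs \<subseteq> {a..b} \<longrightarrow>
        (\<Sum>(x,y)\<leftarrow>zip xs (tl xs). \<bar>f y - f x\<bar>) \<le> B)"

definition psi :: "(real \<Rightarrow> real) \<Rightarrow> real \<Rightarrow> real" where
  "psi \<alpha> s = integral {0..s} (\<lambda>\<sigma>. 1 / \<alpha> \<sigma>)"

definition Lpar :: "(real \<Rightarrow> real) \<Rightarrow> real \<Rightarrow> real" where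
  "Lpar \<alpha> ell = psi \<alpha> ell"

definition phi :: "(real \<Rightarrow> real) \<Rightarrow> real \<Rightarrow> real \<Rightarrow> real" where
  "phi \<alpha> ell = the_inv_into {0..ell} (psi \<alpha>)"

definition beta :: "(real \<Rightarrow> real) \<Rightarrow> real \<Rightarrow> real \<Rightarrow> real" where
  "beta \<alpha> ell t = \<alpha> (phi \<alpha> ell t)"

text \<open>W^{1,infty}((0,L);X), identified with Lipschitz maps on [0,L].\<close>
definition W1inf :: "real \<Rightarrow> (real \<Rightarrow> 'a::metric_space) \<Rightarrow> bool" where
  "W1inf L f \<longleftrightarrow> (\<exists>M. M-lipschitz_on {0..L} f)"

definition sphere_valued :: "real \<Rightarrow> (real \<Rightarrow> 'a::real_normed_vector) \<Rightarrow> bool" where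
  "sphere_valued L f \<longleftrightarrow> (\<forall>t\<in>{0..L}. norm (f t) = 1)"

definition constraintsC ::
  "real \<Rightarrow> (real \<Rightarrow> real) \<Rightarrow> 'a::euclidean_space \<Rightarrow> 'a \<Rightarrow> 'a \<Rightarrow> (real \<Rightarrow> 'a) \<Rightarrow> bool" where
  "constraintsC L \<beta> T1 T2 a \<tau> \<longleftrightarrow>
     \<tau> 0 = T1 \<and> \<tau> L = T2 \<and> ((\<lambda>t. \<beta> t *\<^sub>R \<tau> t) has_integral a) {0..L}"

definition Kinf :: "real \<Rightarrow> (real \<Rightarrow> 'a::real_normed_vector) \<Rightarrow> ereal" where
  "Kinf L \<tau> = esssup (restrict_space lborel {0<..<L})
                  (\<lambda>t. ereal (norm (vector_derivative \<tau> (at t))))"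

definition pseudo_minimiser ::
  "real \<Rightarrow> (real \<Rightarrow> real) \<Rightarrow> 'a::euclidean_space \<Rightarrow> 'a \<Rightarrow> 'a \<Rightarrow> (real \<Rightarrow> 'a) \<Rightarrow> bool" where
  "pseudo_minimiser L \<beta> T1 T2 a \<tau> \<longleftrightarrow>
     W1inf L \<tau> \<and> sphere_valued L \<tau> \<and> constraintsC L \<beta> T1 T2 a \<tau> \<and>
     (\<exists>m::real. \<forall>\<tau>'. W1inf L \<tau>' \<and> sphere_valued L \<tau>' \<and> constraintsC L \<beta> T1 T2 a \<tau>' \<longrightarrow>
        Kinf L \<tau> \<le> Kinf L \<tau>' +
          ereal (m / (2 * L) * integral {0..L} (\<lambda>t. \<beta> t * (norm (\<tau>' t - \<tau> t))\<^sup>2)))"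

end

theory Submission
  imports Defs
begin

(*
  Test the adjoint equations against an admissible competitor \<sigma>.  Since \<sigma> and \<tau> have the
  same end points, the integral of (u \<bullet> \<sigma> - u \<bullet> \<tau>)' vanishes; since they have the same
  weighted integral, so does the integral of \<beta> \<lambda> \<bullet> (\<sigma> - \<tau>).  Pointwise u \<bullet> \<tau>' = k |u|,
  u \<bullet> \<sigma>' \<le> K\<^sub>\<infinity>(\<sigma>) |u| and 1 - \<tau> \<bullet> \<sigma> = |\<sigma> - \<tau>|\<^sup>2 / 2, and the first adjoint equation
  turns the remaining terms into (\<beta> \<lambda> \<bullet> \<tau> + k |u|) |\<sigma> - \<tau>|\<^sup>2 / 2.  Hence
  (k - K\<^sub>\<infinity>(\<sigma>)) \<integral>|u| \<le> c/2 \<integral>\<beta> |\<sigma> - \<tau>|\<^sup>2 whenever \<beta> \<lambda> \<bullet> \<tau> + k |u| \<le> c \<beta>: a crude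
  bound for c gives pseudo-minimality, and c = 0 gives minimality.

  Carrying this out for Lipschitz curves needs Lebesgue's theorem that Lipschitz functions
  are differentiable almost everywhere (via the Vitali covering theorem applied to the sets
  where a monotone function oscillates between two slopes) and the fundamental theorem of
  calculus for Lipschitz functions.
*)

section \<open>Differentiability of Lipschitz functions almost everywhere\<close>

lemma Vitali_covering_intervals:
  fixes S T :: "real set"
  assumes "open T" "S \<subseteq> T"
    and fine: "\<And>x e. x \<in> S \<Longrightarrow> e > 0 \<Longrightarrow> \<exists>l r. l \<le> x \<and> x \<le> r \<and> l < r \<and> r - l < e \<and> P l r"
  obtains C where "countable C" "C \<subseteq> {(l, r). l < r \<and> {l..r} \<subseteq> T \<and> P l r}"
    "disjoint_family_on (\<lambda>(l, r). {l..r}) C" "negligible (S - (\<Union>(l, r)\<in>C. {l..r}))"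
proof -
  define K where "K = {(l, r). l < r \<and> {l..r} \<subseteq> T \<and> P l r}"
  define ctr where "ctr = (\<lambda>(l, r). (l + r) / 2 :: real)"
  define rad where "rad = (\<lambda>(l, r). (r - l) / 2 :: real)"
  have cb: "cball (ctr i) (rad i) = (\<lambda>(l, r). {l..r}) i" for i
    by (cases i) (auto simp: ctr_def rad_def cball_eq_atLeastAtMost field_simps)
  have "\<exists>i. i \<in> K \<and> x \<in> cball (ctr i) (rad i) \<and> rad i < d"
    if x: "x \<in> S" and d: "0 < d" for x d
  proof -
    obtain e where e: "e > 0" "ball x e \<subseteq> T" using assms(1,2) x open_contains_ball by blast
    then obtain l r where lr: "l \<le> x" "x \<le> r" "l < r" "r - l < min e (2 * d)" "P l r"
      using fine[OF x, of "min e (2 * d)"] d by auto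
    then have "{l..r} \<subseteq> ball x e" by (auto simp: dist_real_def)
    with e have "{l..r} \<subseteq> T" by blast
    with lr have "(l, r) \<in> K" by (simp add: K_def)
    moreover have "x \<in> cball (ctr (l, r)) (rad (l, r))" using lr by (simp add: cb)
    ultimately show ?thesis using lr by (intro exI[of _ "(l, r)"]) (simp add: rad_def)
  qed
  moreover have "\<And>i. i \<in> K \<Longrightarrow> 0 < rad i" by (auto simp: K_def rad_def)
  ultimately obtain C where C: "countable C" "C \<subseteq> K"
      "pairwise (\<lambda>i j. disjnt (cball (ctr i) (rad i)) (cball (ctr j) (rad j))) C"
      "negligible (S - (\<Union>i\<in>C. cball (ctr i) (rad i)))"
    using Vitali_covering_theorem_cballs[of K rad S ctr] by blast
  show ?thesis
  proof (rule that[OF C(1)])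
    show "C \<subseteq> {(l, r). l < r \<and> {l..r} \<subseteq> T \<and> P l r}"
      using C(2) by (simp add: K_def)
    show "disjoint_family_on (\<lambda>(l, r). {l..r}) C"
      using C(3) unfolding disjoint_family_on_def pairwise_def disjnt_def cb by blast
    show "negligible (S - (\<Union>(l, r)\<in>C. {l..r}))"
      using C(4) unfolding cb .
  qed
qed

lemma lebesgue_outer_open_le:
  assumes "S \<in> sets lebesgue" "0 < e"
  obtains U where "open U" "S \<subseteq> U" "emeasure lebesgue U \<le> emeasure lebesgue S + ennreal e"
proof -
  obtain U where U: "open U" "S \<subseteq> U" "U - S \<in> lmeasurable" "emeasure lebesgue (U - S) < ennreal e"
    using sets_lebesgue_outer_open[OF assms] by blast
  have "emeasure lebesgue U \<le> emeasure lebesgue S + emeasure lebesgue (U - S)"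
    using emeasure_subadditive[of S lebesgue "U - S"] assms(1) U(2,3) by (simp add: Un_absorb1 Un_Diff_cancel)
  also have "\<dots> \<le> emeasure lebesgue S + ennreal e"
    using U(4) by (intro add_left_mono) simp
  finally show ?thesis using that U(1,2) by blast
qed

lemma disjoint_family_on_mono_image_intervals:
  fixes g :: "real \<Rightarrow> real"
  assumes "mono g" "disjoint_family_on (\<lambda>(l, r). {l..r}) C" "C \<subseteq> {(l, r). l \<le> r}"
  shows "disjoint_family_on (\<lambda>(l, r). {g l<..<g r}) C"
  unfolding disjoint_family_on_def
proof (intro ballI impI)
  fix i j assume ij: "i \<in> C" "j \<in> C" "i \<noteq> j"
  obtain l r l' r' where lr: "i = (l, r)" "j = (l', r')" by (cases i, cases j)
  have "(\<lambda>(l, r). {l..r}) i \<inter> (\<lambda>(l, r). {l..r}) j = {}"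
    using assms(2) ij unfolding disjoint_family_on_def by blast
  then have "{l..r} \<inter> {l'..r'} = {}" by (simp add: lr)
  have "l \<le> r" "l' \<le> r'" using assms(3) ij unfolding lr by auto
  have "r < l' \<or> r' < l"
  proof (rule ccontr)
    assume "\<not> (r < l' \<or> r' < l)"
    then have "max l l' \<in> {l..r} \<inter> {l'..r'}" using \<open>l \<le> r\<close> \<open>l' \<le> r'\<close> by auto
    with \<open>{l..r} \<inter> {l'..r'} = {}\<close> show False by blast
  qed
  then have "g r \<le> g l' \<or> g r' \<le> g l" using \<open>mono g\<close> by (meson less_imp_le monoD)
  then have "{g l<..<g r} \<inter> {g l'<..<g r'} = {}" by auto
  then show "(\<lambda>(l, r). {g l<..<g r}) i \<inter> (\<lambda>(l, r). {g l<..<g r}) j = {}"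
    by (simp add: lr)
qed

lemma emeasure_disjoint_UN_Icc:
  assumes "countable C" "disjoint_family_on (\<lambda>(l, r). {l..r}) C" "C \<subseteq> {(l, r). l \<le> r}"
  shows "emeasure lebesgue (\<Union>(l, r)\<in>C. {l..r}) = (\<integral>\<^sup>+(l, r). ennreal (r - l) \<partial>count_space C)"
  using assms by (subst emeasure_UN_countable) (auto intro!: nn_integral_cong simp: case_prod_beta)

lemma emeasure_disjoint_UN_mono_image_Ioo:
  fixes g :: "real \<Rightarrow> real"
  assumes "mono g" "countable C" "disjoint_family_on (\<lambda>(l, r). {l..r}) C" "C \<subseteq> {(l, r). l \<le> r}"
  shows "emeasure lebesgue (\<Union>(l, r)\<in>C. {g l<..<g r}) = (\<integral>\<^sup>+(l, r). ennreal (g r - g l) \<partial>count_space C)"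
proof -
  have "g l \<le> g r" if "(l, r) \<in> C" for l r
    using assms(4) that by (intro monoD[OF assms(1)]) auto
  then show ?thesis
    using assms disjoint_family_on_mono_image_intervals[OF assms(1,3,4)]
    by (subst emeasure_UN_countable) (auto intro!: nn_integral_cong simp: case_prod_beta)
qed

lemma slope_gt_imp_emeasure_image_ge:
  fixes g :: "real \<Rightarrow> real"
  assumes g: "mono g" "continuous_on UNIV g" and q: "0 \<le> q"
    and S: "S \<in> sets lebesgue" and A: "A \<in> sets lebesgue" "g ` S \<subseteq> A"
    and steep: "\<And>x e. x \<in> S \<Longrightarrow> 0 < e \<Longrightarrow>
      \<exists>l r. l \<le> x \<and> x \<le> r \<and> l < r \<and> r - l < e \<and> q * (r - l) < g r - g l"
  shows "ennreal q * emeasure lebesgue S \<le> emeasure lebesgue A"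
proof (rule ennreal_le_epsilon)
  fix \<epsilon> :: real assume "0 < \<epsilon>"
  obtain U where U: "open U" "A \<subseteq> U" "emeasure lebesgue U \<le> emeasure lebesgue A + ennreal \<epsilon>"
    using lebesgue_outer_open_le[OF A(1) \<open>0 < \<epsilon>\<close>] by blast
  have open_pre: "open (g -` U)" using U(1) g(2) by (simp add: continuous_on_open_vimage)
  have S_pre: "S \<subseteq> g -` U" using A(2) U(2) by blast
  obtain C where C: "countable C"
    and CU: "C \<subseteq> {(l, r). l < r \<and> {l..r} \<subseteq> g -` U \<and> q * (r - l) < g r - g l}"
    and disj: "disjoint_family_on (\<lambda>(l, r). {l..r}) C" and null: "negligible (S - (\<Union>(l, r)\<in>C. {l..r}))"
    using Vitali_covering_intervals[OF open_pre S_pre steep] by blast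
  have C_le: "C \<subseteq> {(l, r). l \<le> r}" using CU by auto
  have UC: "(\<Union>(l, r)\<in>C. {l..r}) \<in> sets lebesgue"
    using C by (intro sets.countable_UN'') (auto simp: case_prod_beta)
  have "emeasure lebesgue S \<le> emeasure lebesgue ((\<Union>(l, r)\<in>C. {l..r}) \<union> (S - (\<Union>(l, r)\<in>C. {l..r})))"
    using UC null S by (intro emeasure_mono) (auto simp: negligible_iff_null_sets)
  also have "\<dots> = emeasure lebesgue (\<Union>(l, r)\<in>C. {l..r})"
    by (rule emeasure_Un_null_set[OF UC null[unfolded negligible_iff_null_sets]])
  also have "\<dots> = (\<integral>\<^sup>+(l, r). ennreal (r - l) \<partial>count_space C)"
    by (rule emeasure_disjoint_UN_Icc[OF C disj C_le])
  finally have "ennreal q * emeasure lebesgue S \<le> ennreal q * (\<integral>\<^sup>+(l, r). ennreal (r - l) \<partial>count_space C)"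
    by (rule mult_left_mono) simp
  also have "\<dots> = (\<integral>\<^sup>+(l, r). ennreal (q * (r - l)) \<partial>count_space C)"
    using q by (subst nn_integral_cmult[symmetric]) (auto intro!: nn_integral_cong simp: ennreal_mult')
  also have "\<dots> \<le> (\<integral>\<^sup>+(l, r). ennreal (g r - g l) \<partial>count_space C)"
    using CU by (intro nn_integral_mono) (auto intro!: ennreal_leI split: prod.splits)
  also have "\<dots> = emeasure lebesgue (\<Union>(l, r)\<in>C. {g l<..<g r})"
    by (rule emeasure_disjoint_UN_mono_image_Ioo[OF g(1) C disj C_le, symmetric])
  also have "\<dots> \<le> emeasure lebesgue U"
  proof (rule emeasure_mono)
    have "{g l<..<g r} \<subseteq> U" if "(l, r) \<in> C" for l r
    proof
      fix y assume y: "y \<in> {g l<..<g r}"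
      have lr: "l < r" "{l..r} \<subseteq> g -` U" using CU that by auto
      moreover have "continuous_on {l..r} g" using g(2) continuous_on_subset by blast
      ultimately obtain x where "x \<in> {l..r}" "g x = y"
        using IVT'[of g l y r] y by (auto simp: less_imp_le)
      then show "y \<in> U" using lr by blast
    qed
    then show "(\<Union>(l, r)\<in>C. {g l<..<g r}) \<subseteq> U" by auto
  qed (use U(1) in auto)
  also have "\<dots> \<le> emeasure lebesgue A + ennreal \<epsilon>" by (rule U(3))
  finally show "ennreal q * emeasure lebesgue S \<le> emeasure lebesgue A + ennreal \<epsilon>" .
qed

lemma mono_image_subset_UN_intervals:
  fixes g :: "real \<Rightarrow> real"
  assumes "mono g"
  shows "g ` S \<subseteq> (\<Union>(l, r)\<in>C. {g l<..<g r}) \<union>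
    (g ` (S - (\<Union>(l, r)\<in>C. {l..r})) \<union> ((\<lambda>(l, r). g l) ` C \<union> (\<lambda>(l, r). g r) ` C))"
proof
  fix y assume "y \<in> g ` S"
  then obtain x where x: "x \<in> S" "y = g x" by blast
  show "y \<in> (\<Union>(l, r)\<in>C. {g l<..<g r}) \<union>
    (g ` (S - (\<Union>(l, r)\<in>C. {l..r})) \<union> ((\<lambda>(l, r). g l) ` C \<union> (\<lambda>(l, r). g r) ` C))"
  proof (cases "x \<in> (\<Union>(l, r)\<in>C. {l..r})")
    case True
    then obtain l r where lr: "(l, r) \<in> C" "l \<le> x" "x \<le> r" by auto
    have le: "g l \<le> g x" "g x \<le> g r" using lr monoD[OF assms] by auto
    show ?thesis
    proof (cases "g l < g x \<and> g x < g r")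
      case True
      then have "g x \<in> (\<Union>(l, r)\<in>C. {g l<..<g r})" by (intro UN_I[OF lr(1)]) auto
      then show ?thesis unfolding x(2) by (rule UnI1)
    next
      case False
      then have "g x = g l \<or> g x = g r" using le by linarith
      moreover have "g l \<in> (\<lambda>(l, r). g l) ` C" "g r \<in> (\<lambda>(l, r). g r) ` C" using lr(1) by force+
      ultimately have "g x \<in> (\<lambda>(l, r). g l) ` C \<union> (\<lambda>(l, r). g r) ` C" by auto
      then show ?thesis unfolding x(2) by (rule UnI2[OF UnI2])
    qed
  qed (use x in auto)
qed

lemma slope_lt_imp_emeasure_image_le:
  fixes g :: "real \<Rightarrow> real"
  assumes g: "mono g" "B-lipschitz_on UNIV g" and p: "0 \<le> p" and \<epsilon>: "0 < \<epsilon>"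
    and S: "S \<in> sets lebesgue"
    and flat: "\<And>x e. x \<in> S \<Longrightarrow> 0 < e \<Longrightarrow>
      \<exists>l r. l \<le> x \<and> x \<le> r \<and> l < r \<and> r - l < e \<and> g r - g l < p * (r - l)"
  obtains A where "A \<in> sets lebesgue" "g ` S \<subseteq> A"
    "emeasure lebesgue A \<le> ennreal p * (emeasure lebesgue S + ennreal \<epsilon>)"
proof -
  obtain T where T: "open T" "S \<subseteq> T" "emeasure lebesgue T \<le> emeasure lebesgue S + ennreal \<epsilon>"
    using lebesgue_outer_open_le[OF S \<epsilon>] by blast
  obtain C where C: "countable C"
    and CT: "C \<subseteq> {(l, r). l < r \<and> {l..r} \<subseteq> T \<and> g r - g l < p * (r - l)}"
    and disj: "disjoint_family_on (\<lambda>(l, r). {l..r}) C" and null: "negligible (S - (\<Union>(l, r)\<in>C. {l..r}))"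
    using Vitali_covering_intervals[OF T(1,2) flat] by blast
  have C_le: "C \<subseteq> {(l, r). l \<le> r}" using CT by auto
  define N where "N = S - (\<Union>(l, r)\<in>C. {l..r})"
  define V where "V = (\<Union>(l, r)\<in>C. {g l<..<g r})"
  define E where "E = (\<lambda>(l, r). g l) ` C \<union> (\<lambda>(l, r). g r) ` C"
  have V: "V \<in> sets lebesgue"
    unfolding V_def using C by (intro sets.countable_UN'') (auto simp: case_prod_beta)
  have "negligible (g ` N)"
  proof (rule negligible_locally_Lipschitz_image)
    show "negligible N" using null by (simp add: N_def)
    show "\<exists>T B. open T \<and> x \<in> T \<and> (\<forall>y\<in>N \<inter> T. norm (g y - g x) \<le> B * norm (y - x))" for x
      using lipschitz_on_normD[OF g(2)] by (intro exI[of _ UNIV] exI[of _ B]) auto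
  qed simp
  moreover have "E \<in> null_sets lebesgue"
    unfolding E_def using C by (auto intro: null_sets_completionI countable_imp_null_set_lborel)
  ultimately have null_img: "g ` N \<union> E \<in> null_sets lebesgue"
    by (simp add: negligible_iff_null_sets null_sets.Un)
  have "g ` S \<subseteq> V \<union> (g ` N \<union> E)"
    unfolding V_def N_def E_def by (rule mono_image_subset_UN_intervals[OF g(1)])
  moreover have "V \<union> (g ` N \<union> E) \<in> sets lebesgue" using V null_img by auto
  moreover have "emeasure lebesgue (V \<union> (g ` N \<union> E)) \<le> ennreal p * (emeasure lebesgue S + ennreal \<epsilon>)"
  proof -
    have "emeasure lebesgue (V \<union> (g ` N \<union> E)) = emeasure lebesgue V"
      by (rule emeasure_Un_null_set[OF V null_img])
    also have "\<dots> = (\<integral>\<^sup>+(l, r). ennreal (g r - g l) \<partial>count_space C)"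
      unfolding V_def by (rule emeasure_disjoint_UN_mono_image_Ioo[OF g(1) C disj C_le])
    also have "\<dots> \<le> (\<integral>\<^sup>+(l, r). ennreal (p * (r - l)) \<partial>count_space C)"
      using CT by (intro nn_integral_mono) (auto intro!: ennreal_leI split: prod.splits)
    also have "\<dots> = ennreal p * (\<integral>\<^sup>+(l, r). ennreal (r - l) \<partial>count_space C)"
      using p by (subst nn_integral_cmult[symmetric]) (auto intro!: nn_integral_cong simp: ennreal_mult')
    also have "\<dots> = ennreal p * emeasure lebesgue (\<Union>(l, r)\<in>C. {l..r})"
      by (simp add: emeasure_disjoint_UN_Icc[OF C disj C_le])
    also have "\<dots> \<le> ennreal p * emeasure lebesgue T"
      using CT T(1) by (intro mult_left_mono emeasure_mono) auto
    also have "\<dots> \<le> ennreal p * (emeasure lebesgue S + ennreal \<epsilon>)"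
      using T(3) by (rule mult_left_mono) simp
    finally show ?thesis .
  qed
  ultimately show ?thesis using that by blast
qed

lemma slope_oscillation_null:
  fixes g :: "real \<Rightarrow> real"
  assumes g: "mono g" "B-lipschitz_on UNIV g" and pq: "0 \<le> p" "p < q"
    and S: "S \<in> sets lebesgue" "emeasure lebesgue S < \<infinity>"
    and flat: "\<And>x e. x \<in> S \<Longrightarrow> 0 < e \<Longrightarrow>
      \<exists>l r. l \<le> x \<and> x \<le> r \<and> l < r \<and> r - l < e \<and> g r - g l < p * (r - l)"
    and steep: "\<And>x e. x \<in> S \<Longrightarrow> 0 < e \<Longrightarrow>
      \<exists>l r. l \<le> x \<and> x \<le> r \<and> l < r \<and> r - l < e \<and> q * (r - l) < g r - g l"
  shows "S \<in> null_sets lebesgue"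
proof -
  obtain m where m: "emeasure lebesgue S = ennreal m" "0 \<le> m"
    using S(2) by (cases "emeasure lebesgue S") auto
  have qm: "q * m \<le> p * (m + \<epsilon>)" if \<epsilon>: "0 < \<epsilon>" for \<epsilon>
  proof -
    obtain A where A: "A \<in> sets lebesgue" "g ` S \<subseteq> A"
        "emeasure lebesgue A \<le> ennreal p * (emeasure lebesgue S + ennreal \<epsilon>)"
      using slope_lt_imp_emeasure_image_le[OF g pq(1) \<epsilon> S(1) flat] by blast
    have "ennreal q * emeasure lebesgue S \<le> emeasure lebesgue A"
      using pq by (intro slope_gt_imp_emeasure_image_ge[OF g(1) lipschitz_on_continuous_on[OF g(2)]
          _ S(1) A(1,2) steep]) auto
    with A(3) have "ennreal (q * m) \<le> ennreal (p * (m + \<epsilon>))"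
      using m pq \<epsilon> by (simp add: ennreal_mult ennreal_plus[symmetric] del: ennreal_plus)
    then show ?thesis using pq m \<epsilon> by (subst (asm) ennreal_le_iff) auto
  qed
  have "q * m \<le> p * m + e" if "0 < e" for e
  proof -
    have "q * m \<le> p * (m + e / (p + 1))" using qm[of "e / (p + 1)"] that pq by simp
    also have "p * (e / (p + 1)) \<le> e" using pq that by (simp add: field_simps)
    then have "p * (m + e / (p + 1)) \<le> p * m + e" by (simp add: distrib_left)
    finally show ?thesis .
  qed
  then have "q * m \<le> p * m" by (rule field_le_epsilon)
  then have "(q - p) * m \<le> 0" by (simp add: algebra_simps)
  then have "m = 0" using pq m(2) by (simp add: mult_le_0_iff)
  then show ?thesis using m S(1) by (simp add: null_sets_def)
qed

(* Average slopes below p are encoded as slopes of -g above -p. *)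

definition steep_set :: "(real \<Rightarrow> real) \<Rightarrow> real \<Rightarrow> real set" where
  "steep_set g q =
    (\<Inter>n::nat. \<Union>{{l<..<r} | l r. l < r \<and> r - l < 1 / Suc n \<and> q * (r - l) < g r - g l})"

lemma steep_set_borel: "steep_set g q \<in> sets borel"
proof -
  have "\<Union>{{l<..<r} | l r. l < r \<and> r - l < 1 / Suc n \<and> q * (r - l) < g r - g l} \<in> sets borel"
    for n :: nat
    by (intro borel_open open_Union) auto
  then show ?thesis unfolding steep_set_def by (intro sets.countable_INT) auto
qed

lemma steep_setD:
  assumes "x \<in> steep_set g q" "0 < e"
  shows "\<exists>l r. l \<le> x \<and> x \<le> r \<and> l < r \<and> r - l < e \<and> q * (r - l) < g r - g l"
proof -
  obtain n :: nat where n: "1 / Suc n < e" using nat_approx_posE[OF assms(2)] by metis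
  have "x \<in> \<Union>{{l<..<r} | l r. l < r \<and> r - l < 1 / Suc n \<and> q * (r - l) < g r - g l}"
    using assms(1) unfolding steep_set_def by blast
  then obtain l r where "l < x" "x < r" "r - l < 1 / Suc n" "q * (r - l) < g r - g l" by auto
  with n show ?thesis by (intro exI[of _ l] exI[of _ r]) auto
qed

lemma steep_set_add_linear: "steep_set (\<lambda>x. g x + c * x) (q + c) = steep_set g q"
proof -
  have "((q + c) * (r - l) < g r + c * r - (g l + c * l)) \<longleftrightarrow> (q * (r - l) < g r - g l)"
    for l r :: real
    by (simp add: algebra_simps)
  then show ?thesis unfolding steep_set_def by presburger
qed

lemma mem_steep_set:
  fixes g :: "real \<Rightarrow> real"
  assumes g: "mono g" and "q' < q" and freq: "\<exists>\<^sub>F h in at 0. q < (g (x + h) - g x) / h"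
  shows "x \<in> steep_set g q'"
proof -
  have "x \<in> \<Union>{{l<..<r} | l r. l < r \<and> r - l < 1 / Suc n \<and> q' * (r - l) < g r - g l}"
    for n :: nat
  proof -
    obtain h where h: "h \<noteq> 0" "\<bar>h\<bar> < 1 / (2 * Suc n)" "q < (g (x + h) - g x) / h"
      using freq[unfolded frequently_at, rule_format, of "1 / (2 * Suc n)"] by auto
    define d where "d = \<bar>h\<bar>"
    define \<delta> where "\<delta> = min (1 / (4 * Suc n)) ((q - q') * d / (2 * \<bar>q'\<bar> + 2))"
    define l where "l = min x (x + h) - \<delta>"
    define r where "r = max x (x + h) + \<delta>"
    have d: "0 < d" "d < 1 / (2 * Suc n)" using h by (auto simp: d_def)
    have \<delta>: "0 < \<delta>" "\<delta> \<le> 1 / (4 * Suc n)" "\<delta> * (2 * \<bar>q'\<bar> + 2) \<le> (q - q') * d"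
      using d \<open>q' < q\<close> by (auto simp: \<delta>_def min_le_iff_disj pos_le_divide_eq[symmetric])
    have rl: "r - l = d + 2 * \<delta>" by (auto simp: l_def r_def d_def)
    have "q * d < g (max x (x + h)) - g (min x (x + h))"
      using h(1,3) by (cases "0 < h") (auto simp: d_def field_simps)
    also have "\<dots> \<le> g r - g l"
      using \<delta>(1) by (intro diff_mono monoD[OF g]) (auto simp: l_def r_def)
    finally have inc: "q * d < g r - g l" .
    have "q' * \<delta> \<le> \<bar>q'\<bar> * \<delta>" using \<delta>(1) by (intro mult_right_mono) auto
    moreover have "q' * (r - l) = q' * d + 2 * (q' * \<delta>)" unfolding rl by (simp add: algebra_simps)
    moreover have "\<delta> * (2 * \<bar>q'\<bar> + 2) = 2 * (\<bar>q'\<bar> * \<delta>) + 2 * \<delta>" by (simp add: algebra_simps)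
    moreover have "(q - q') * d = q * d - q' * d" by (simp add: algebra_simps)
    ultimately have "q' * (r - l) \<le> q * d" using \<delta>(1,3) by linarith
    moreover have "r - l < 1 / Suc n" using d \<delta> unfolding rl by (simp add: field_simps)
    moreover have x: "l < x" "x < r" using \<delta>(1) by (auto simp: l_def r_def)
    ultimately have "{l<..<r} \<in> {{l<..<r} | l r. l < r \<and> r - l < 1 / Suc n \<and> q' * (r - l) < g r - g l}"
      using inc by (intro CollectI exI[of _ l] exI[of _ r]) auto
    then show ?thesis by (rule UnionI) (use x in simp)
  qed
  then show ?thesis by (simp add: steep_set_def)
qed

lemma tendsto_of_no_oscillation:
  fixes s :: "'a \<Rightarrow> real"
  assumes F: "F \<noteq> bot" and bdd: "eventually (\<lambda>h. a \<le> s h \<and> s h \<le> b) F"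
    and no_osc: "\<And>p q. p < q \<Longrightarrow> (\<exists>\<^sub>F h in F. s h < p) \<Longrightarrow> (\<exists>\<^sub>F h in F. q < s h) \<Longrightarrow> False"
  shows "\<exists>l. (s \<longlongrightarrow> l) F"
proof -
  define P where "P = {p. \<exists>\<^sub>F h in F. s h < p}"
  have "eventually (\<lambda>h. s h < b + 1) F" using bdd by eventually_elim auto
  then have "\<exists>\<^sub>F h in F. s h < b + 1" using F by (simp add: eventually_frequently)
  then have "b + 1 \<in> P" by (simp add: P_def)
  then have P: "P \<noteq> {}" by blast
  have a_less: "a < p" if "p \<in> P" for p
  proof -
    have "\<exists>\<^sub>F h in F. s h < p" using that by (simp add: P_def)
    then have "\<exists>\<^sub>F h in F. s h < p \<and> a \<le> s h \<and> s h \<le> b"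
      using bdd by (rule frequently_eventually_frequently)
    then show ?thesis by (auto dest: frequently_ex)
  qed
  have P_bdd: "bdd_below P" by (rule bdd_belowI[of _ a]) (use a_less in \<open>auto intro: less_imp_le\<close>)
  have "(s \<longlongrightarrow> Inf P) F"
  proof (rule order_tendstoI)
    fix y assume "y < Inf P"
    show "eventually (\<lambda>h. y < s h) F"
    proof (rule ccontr)
      assume "\<not> eventually (\<lambda>h. y < s h) F"
      moreover have "eventually (\<lambda>h. y < s h) F" if "eventually (\<lambda>h. (y + Inf P) / 2 \<le> s h) F"
        using that by eventually_elim (use \<open>y < Inf P\<close> in auto)
      ultimately have "\<exists>\<^sub>F h in F. s h < (y + Inf P) / 2"
        unfolding frequently_def by (auto simp: not_less)
      then have "Inf P \<le> (y + Inf P) / 2" using P_bdd by (intro cInf_lower) (auto simp: P_def)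
      with \<open>y < Inf P\<close> show False by simp
    qed
  next
    fix y assume "Inf P < y"
    then obtain p where p: "p \<in> P" "p < y" using cInf_lessD[OF P] by blast
    then have "\<not> (\<exists>\<^sub>F h in F. (p + y) / 2 < s h)"
      using no_osc[of p "(p + y) / 2"] by (auto simp: P_def)
    then have "eventually (\<lambda>h. s h \<le> (p + y) / 2) F" by (simp add: frequently_def not_less)
    then show "eventually (\<lambda>h. s h < y) F" by eventually_elim (use \<open>p < y\<close> in auto)
  qed
  then show ?thesis by blast
qed

lemma lipschitz_on_mono_add_linear:
  fixes f :: "real \<Rightarrow> real"
  assumes "B-lipschitz_on UNIV f"
  shows "mono (\<lambda>x. f x + B * x)"
proof (rule monoI)
  fix x y :: real assume "x \<le> y"
  have "\<bar>f y - f x\<bar> \<le> B * \<bar>y - x\<bar>" using lipschitz_on_normD[OF assms, of y x] by simp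
  then show "f x + B * x \<le> f y + B * y" using \<open>x \<le> y\<close> by (simp add: abs_le_iff algebra_simps)
qed

lemma steep_sets_null:
  fixes g :: "real \<Rightarrow> real"
  assumes g: "mono g" "B-lipschitz_on UNIV g" and pq: "0 \<le> p" "p < q"
  shows "steep_set (\<lambda>x. - g x) (- p) \<inter> steep_set g q \<in> null_sets lebesgue"
proof -
  let ?D = "steep_set (\<lambda>x. - g x) (- p) \<inter> steep_set g q"
  have "?D \<inter> {- real R<..<real R} \<in> null_sets lebesgue" for R :: nat
  proof (rule slope_oscillation_null[OF g pq])
    show "?D \<inter> {- real R<..<real R} \<in> sets lebesgue"
      using steep_set_borel by (intro sets.Int) auto
    have "emeasure lebesgue (?D \<inter> {- real R<..<real R}) \<le> emeasure lebesgue {- real R<..<real R}"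
      by (rule emeasure_mono) auto
    then show "emeasure lebesgue (?D \<inter> {- real R<..<real R}) < \<infinity>"
      by (simp add: order_le_less_trans)
  next
    fix x e :: real assume x: "x \<in> ?D \<inter> {- real R<..<real R}" and e: "0 < e"
    then obtain l r where "l \<le> x" "x \<le> r" "l < r" "r - l < e" "- p * (r - l) < - g r - - g l"
      using steep_setD[of x "\<lambda>x. - g x" "- p" e] by blast
    then show "\<exists>l r. l \<le> x \<and> x \<le> r \<and> l < r \<and> r - l < e \<and> g r - g l < p * (r - l)"
      by (intro exI[of _ l] exI[of _ r]) auto
    show "\<exists>l r. l \<le> x \<and> x \<le> r \<and> l < r \<and> r - l < e \<and> q * (r - l) < g r - g l"
      using steep_setD[of x g q e] x e by blast
  qed
  then have "(\<Union>R. ?D \<inter> {- real R<..<real R}) \<in> null_sets lebesgue" by blast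
  moreover have "(\<Union>R. ?D \<inter> {- real R<..<real R}) = ?D"
  proof (intro equalityI subsetI)
    fix x assume "x \<in> ?D"
    moreover obtain R :: nat where "\<bar>x\<bar> < R" using reals_Archimedean2 by blast
    ultimately show "x \<in> (\<Union>R. ?D \<inter> {- real R<..<real R})" by (intro UN_I[of R]) auto
  qed auto
  ultimately show ?thesis by simp
qed

lemma mono_lipschitz_difference_quotient_bounds:
  fixes g :: "real \<Rightarrow> real"
  assumes g: "mono g" "B-lipschitz_on UNIV g" and "h \<noteq> 0"
  shows "0 \<le> (g (x + h) - g x) / h \<and> (g (x + h) - g x) / h \<le> B"
proof
  show "0 \<le> (g (x + h) - g x) / h"
  proof (cases "0 < h")
    case True
    then have "g x \<le> g (x + h)" by (intro monoD[OF g(1)]) simp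
    with True show ?thesis by simp
  next
    case False
    then have "g (x + h) \<le> g x" by (intro monoD[OF g(1)]) simp
    with False show ?thesis by (simp add: divide_nonpos_nonpos)
  qed
  have "\<bar>g (x + h) - g x\<bar> \<le> B * \<bar>h\<bar>" using lipschitz_on_normD[OF g(2), of "x + h" x] by simp
  then have "\<bar>(g (x + h) - g x) / h\<bar> \<le> B" using \<open>h \<noteq> 0\<close> by (simp add: abs_divide divide_le_eq)
  then show "(g (x + h) - g x) / h \<le> B" by (rule abs_le_D1)
qed

lemma mono_lipschitz_nondifferentiable_steep:
  fixes g :: "real \<Rightarrow> real"
  assumes g: "mono g" "B-lipschitz_on UNIV g" and nd: "\<not> g differentiable (at x)"
  obtains p q where "p \<in> \<rat>" "q \<in> \<rat>" "0 \<le> p" "p < q"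
    "x \<in> steep_set (\<lambda>x. - g x) (- p) \<inter> steep_set g q"
proof -
  define s where "s = (\<lambda>h. (g (x + h) - g x) / h)"
  have nz: "eventually (\<lambda>h. h \<noteq> 0) (at (0::real))"
    by (auto simp: eventually_at intro!: exI[of _ 1])
  have bdd: "eventually (\<lambda>h. 0 \<le> s h \<and> s h \<le> B) (at 0)"
    using nz by eventually_elim (simp add: s_def mono_lipschitz_difference_quotient_bounds[OF g])
  have "\<not> (s \<longlongrightarrow> l) (at 0)" for l
  proof
    assume "(s \<longlongrightarrow> l) (at 0)"
    then have "(g has_real_derivative l) (at x)" by (simp add: DERIV_def s_def)
    with nd show False by (auto simp: real_differentiable_def)
  qed
  then obtain p q where pq: "p < q" "\<exists>\<^sub>F h in at 0. s h < p" "\<exists>\<^sub>F h in at 0. q < s h"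
    using tendsto_of_no_oscillation[OF at_neq_bot bdd] by blast
  have "\<exists>\<^sub>F h in at 0. s h < p \<and> 0 \<le> s h \<and> s h \<le> B"
    using pq(2) bdd by (rule frequently_eventually_frequently)
  then have "0 < p" by (auto dest: frequently_ex)
  obtain p' where p': "p' \<in> \<rat>" "p < p'" "p' < (p + q) / 2" using Rats_dense_in_real[of p "(p + q) / 2"] pq(1) by auto
  obtain q' where q': "q' \<in> \<rat>" "(p + q) / 2 < q'" "q' < q" using Rats_dense_in_real[of "(p + q) / 2" q] pq(1) by auto
  have "x \<in> steep_set g q'"
    using mem_steep_set[OF g(1) q'(3)] pq(3) by (simp add: s_def)
  moreover have "x \<in> steep_set (\<lambda>y. - g y) (- p')"
  proof -
    have mono': "mono (\<lambda>y. - g y + B * y)"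
      by (rule lipschitz_on_mono_add_linear) (use g(2) in simp)
    have quot: "((- g (x + h) + B * (x + h)) - (- g x + B * x)) / h = B - s h" if "h \<noteq> 0" for h
      using that by (simp add: s_def field_simps)
    have "\<exists>\<^sub>F h in at 0. s h < p \<and> h \<noteq> 0"
      using pq(2) nz by (rule frequently_eventually_frequently)
    then have "\<exists>\<^sub>F h in at 0. B - p < ((- g (x + h) + B * (x + h)) - (- g x + B * x)) / h"
      by (rule frequently_elim1) (metis quot diff_strict_left_mono)
    then have "x \<in> steep_set (\<lambda>y. - g y + B * y) (- p' + B)"
      by (rule mem_steep_set[OF mono', rotated]) (use p' in simp)
    then show ?thesis using steep_set_add_linear[of "\<lambda>y. - g y" B "- p'"] by simp
  qed
  ultimately show ?thesis using that[of p' q'] p' q' \<open>0 < p\<close> by auto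
qed

lemma lipschitz_differentiable_ae_real:
  fixes f :: "real \<Rightarrow> real"
  assumes f: "M-lipschitz_on UNIV f"
  shows "{x. \<not> f differentiable (at x)} \<in> null_sets lebesgue"
proof -
  define g where "g x = f x + M * x" for x
  have M: "0 \<le> M" using f by (rule lipschitz_on_nonneg)
  have g: "mono g" "(M + M * 1)-lipschitz_on UNIV g" unfolding g_def
    by (rule lipschitz_on_mono_add_linear[OF f],
        rule lipschitz_on_add[OF f lipschitz_on_cmult_real_nonneg[OF lipschitz_on_id M]])
  define I where "I = {(p, q). p \<in> \<rat> \<and> q \<in> \<rat> \<and> 0 \<le> p \<and> p < (q :: real)}"
  have "countable I"
    by (rule countable_subset[of _ "\<rat> \<times> \<rat>"]) (auto simp: I_def countable_rat)
  then have "(\<Union>(p, q)\<in>I. steep_set (\<lambda>x. - g x) (- p) \<inter> steep_set g q) \<in> null_sets lebesgue"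
    by (rule null_sets_UN') (auto simp: I_def intro!: steep_sets_null[OF g])
  moreover have "{x. \<not> f differentiable (at x)} \<subseteq> (\<Union>(p, q)\<in>I. steep_set (\<lambda>x. - g x) (- p) \<inter> steep_set g q)"
  proof
    fix x assume "x \<in> {x. \<not> f differentiable (at x)}"
    then have "\<not> g differentiable (at x)"
      unfolding g_def using differentiable_diff[of "\<lambda>x. f x + M * x" "at x" "\<lambda>x. M * x"] by auto
    then obtain p q where "p \<in> \<rat>" "q \<in> \<rat>" "0 \<le> p" "p < q"
        "x \<in> steep_set (\<lambda>x. - g x) (- p) \<inter> steep_set g q"
      by (rule mono_lipschitz_nondifferentiable_steep[OF g])
    then show "x \<in> (\<Union>(p, q)\<in>I. steep_set (\<lambda>x. - g x) (- p) \<inter> steep_set g q)"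
      by (intro UN_I[of "(p, q)"]) (auto simp: I_def)
  qed
  ultimately show ?thesis by (rule null_sets_completion_subset[rotated])
qed

lemma lipschitz_differentiable_ae:
  fixes f :: "real \<Rightarrow> 'a::euclidean_space"
  assumes f: "M-lipschitz_on UNIV f"
  shows "{x. \<not> f differentiable (at x)} \<in> null_sets lebesgue"
proof -
  have fi: "M-lipschitz_on UNIV (\<lambda>x. f x \<bullet> i)" if "i \<in> Basis" for i
  proof (rule lipschitz_onI)
    fix x y :: real
    have "\<bar>(f x - f y) \<bullet> i\<bar> \<le> norm (f x - f y)" using that by (rule Basis_le_norm)
    also have "\<dots> \<le> M * dist x y" using lipschitz_onD[OF f] by (simp add: dist_norm)
    finally show "dist (f x \<bullet> i) (f y \<bullet> i) \<le> M * dist x y" by (simp add: dist_real_def inner_diff_left)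
  qed (rule lipschitz_on_nonneg[OF f])
  have "(\<Union>i\<in>Basis. {x. \<not> (\<lambda>x. f x \<bullet> i) differentiable (at x)}) \<in> null_sets lebesgue"
    by (rule null_sets_UN'[OF countable_finite[OF finite_Basis]]) (rule lipschitz_differentiable_ae_real[OF fi])
  moreover have "{x. \<not> f differentiable (at x)} \<subseteq> (\<Union>i\<in>Basis. {x. \<not> (\<lambda>x. f x \<bullet> i) differentiable (at x)})"
    using differentiable_componentwise_within[of f _ UNIV] by auto
  ultimately show ?thesis by (rule null_sets_completion_subset[rotated])
qed

section \<open>Derivatives of Lipschitz curves\<close>

lemma has_vector_derivative_at_iff_quotient:
  fixes f :: "real \<Rightarrow> 'a::real_normed_vector"
  shows "(f has_vector_derivative D) (at t) \<longleftrightarrow> ((\<lambda>h. (f (t + h) - f t) /\<^sub>R h) \<midarrow>0\<rightarrow> D)"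
proof -
  have "norm (f (t + h) - f t - h *\<^sub>R D) / norm h = norm ((f (t + h) - f t) /\<^sub>R h - D)"
    if "h \<noteq> 0" for h
  proof -
    have "f (t + h) - f t - h *\<^sub>R D = h *\<^sub>R ((f (t + h) - f t) /\<^sub>R h - D)"
      using that by (simp add: algebra_simps)
    then show ?thesis using that by simp
  qed
  then have "eventually (\<lambda>h. norm (f (t + h) - f t - h *\<^sub>R D) / norm h
      = norm ((f (t + h) - f t) /\<^sub>R h - D)) (at 0)"
    by (auto simp: eventually_at intro!: exI[of _ 1])
  then have "((\<lambda>h. norm (f (t + h) - f t - h *\<^sub>R D) / norm h) \<longlongrightarrow> 0) (at 0)
      \<longleftrightarrow> ((\<lambda>h. norm ((f (t + h) - f t) /\<^sub>R h - D)) \<longlongrightarrow> 0) (at 0)"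
    by (rule tendsto_cong)
  then show ?thesis
    unfolding has_vector_derivative_def has_derivative_at tendsto_norm_zero_iff LIM_zero_iff
    by (simp add: bounded_linear_scaleR_left)
qed

lemma has_vector_derivative_imp_quotient_seq:
  fixes f :: "real \<Rightarrow> 'a::real_normed_vector"
  assumes "(f has_vector_derivative D) (at t)"
  shows "(\<lambda>k. (f (t + inverse (Suc k)) - f t) /\<^sub>R inverse (Suc k)) \<longlonglongrightarrow> D"
proof -
  have "(\<lambda>h. (f (t + h) - f t) /\<^sub>R h) \<midarrow>0\<rightarrow> D"
    using assms by (simp add: has_vector_derivative_at_iff_quotient)
  moreover have "filterlim (\<lambda>k. inverse (real (Suc k))) (at 0) sequentially"
    using LIMSEQ_inverse_real_of_nat by (auto simp: filterlim_at)
  ultimately show ?thesis by (rule filterlim_compose)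
qed

lemma lipschitz_vector_derivative_bound:
  fixes f :: "real \<Rightarrow> 'a::real_normed_vector"
  assumes f: "M-lipschitz_on UNIV f" and D: "(f has_vector_derivative D) (at t)"
  shows "norm D \<le> M"
proof -
  have "norm ((f (t + inverse (Suc k)) - f t) /\<^sub>R inverse (Suc k)) \<le> M" for k :: nat
  proof -
  have "norm ((f (t + inverse (Suc k)) - f t) /\<^sub>R inverse (Suc k))
      = norm (f (t + inverse (Suc k)) - f t) * Suc k"
    by simp
  also have "\<dots> \<le> M * inverse (Suc k) * Suc k"
    using lipschitz_onD[OF f, of "t + inverse (Suc k)" t] by (intro mult_right_mono) (auto simp: dist_norm)
  also have "\<dots> = M" by simp
  finally show ?thesis .
  qed
  then show ?thesis
    using LIMSEQ_le_const2[OF tendsto_norm[OF has_vector_derivative_imp_quotient_seq[OF D]]] by blast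
qed

lemma differentiable_at_iff_quotient_Cauchy:
  fixes f :: "real \<Rightarrow> 'a::banach"
  shows "f differentiable (at t) \<longleftrightarrow> (\<forall>n::nat. \<exists>m::nat. \<forall>h h'.
      (h \<noteq> 0 \<and> \<bar>h\<bar> < 1 / Suc m) \<and> (h' \<noteq> 0 \<and> \<bar>h'\<bar> < 1 / Suc m) \<longrightarrow>
      norm ((f (t + h) - f t) /\<^sub>R h - (f (t + h') - f t) /\<^sub>R h') \<le> 1 / Suc n)"
    (is "_ \<longleftrightarrow> (\<forall>n. \<exists>m. \<forall>h h'. ?C m h \<and> ?C m h' \<longrightarrow> norm (?s h - ?s h') \<le> _)")
proof
  assume "f differentiable (at t)"
  then have "(?s \<longlongrightarrow> vector_derivative f (at t)) (at 0)"
    using vector_derivative_works has_vector_derivative_at_iff_quotient by blast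
  show "\<forall>n. \<exists>m. \<forall>h h'. ?C m h \<and> ?C m h' \<longrightarrow> norm (?s h - ?s h') \<le> 1 / Suc n"
  proof
    fix n :: nat
    have "eventually (\<lambda>h. dist (?s h) (vector_derivative f (at t)) < 1 / (2 * Suc n)) (at 0)"
      using \<open>(?s \<longlongrightarrow> _) _\<close> by (rule tendstoD) simp
    then obtain d where d: "0 < d"
      "\<And>h. h \<noteq> 0 \<Longrightarrow> \<bar>h\<bar> < d \<Longrightarrow> dist (?s h) (vector_derivative f (at t)) < 1 / (2 * Suc n)"
      by (auto simp: eventually_at)
    obtain m :: nat where m: "1 / Suc m < d" using nat_approx_posE[OF d(1)] by metis
    have "norm (?s h - ?s h') \<le> 1 / Suc n" if "?C m h" "?C m h'" for h h'
    proof -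
      have "dist (?s h) (?s h') \<le> dist (?s h) (vector_derivative f (at t)) + dist (?s h') (vector_derivative f (at t))"
        by (rule dist_triangle2)
      also have "\<dots> < 1 / (2 * Suc n) + 1 / (2 * Suc n)"
        using d(2)[of h] d(2)[of h'] that m by (intro add_strict_mono) auto
      also have "\<dots> = 1 / Suc n" by (simp add: field_simps)
      finally show ?thesis by (simp add: dist_norm)
    qed
    then show "\<exists>m. \<forall>h h'. ?C m h \<and> ?C m h' \<longrightarrow> norm (?s h - ?s h') \<le> 1 / Suc n" by blast
  qed
next
  assume C: "\<forall>n. \<exists>m. \<forall>h h'. ?C m h \<and> ?C m h' \<longrightarrow> norm (?s h - ?s h') \<le> 1 / Suc n"
  have "cauchy_filter (filtermap ?s (at 0))"
    unfolding cauchy_filter_metric_filtermap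
  proof (intro allI impI)
    fix e :: real assume "0 < e"
    then obtain n :: nat where n: "1 / Suc n < e" using nat_approx_posE by metis
    obtain m where m: "\<forall>h h'. ?C m h \<and> ?C m h' \<longrightarrow> norm (?s h - ?s h') \<le> 1 / Suc n"
      using C by blast
    have "eventually (?C m) (at 0)" by (auto simp: eventually_at intro!: exI[of _ "1 / Suc m"])
    moreover have "dist (?s h) (?s h') < e" if "?C m h" "?C m h'" for h h'
    proof -
      have "norm (?s h - ?s h') \<le> 1 / Suc n" using m that by blast
      then show ?thesis using n by (simp add: dist_norm)
    qed
    ultimately show "\<exists>P. eventually P (at 0) \<and> (\<forall>h h'. P h \<and> P h' \<longrightarrow> dist (?s h) (?s h') < e)"
      by blast
  qed
  moreover have "filtermap ?s (at 0) \<noteq> bot" by (simp add: filtermap_bot_iff)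
  ultimately obtain D where "filtermap ?s (at 0) \<le> nhds D"
    using cauchy_filter_complete_converges[OF _ complete_UNIV] by auto
  then have "(f has_vector_derivative D) (at t)"
    by (simp add: has_vector_derivative_at_iff_quotient filterlim_def)
  then show "f differentiable (at t)" by (rule differentiableI_vector)
qed

lemma sets_borel_differentiable_points:
  fixes f :: "real \<Rightarrow> 'a::banach"
  assumes f: "continuous_on UNIV f"
  shows "{t. f differentiable (at t)} \<in> sets borel"
proof -
  define H where "H m = {hh :: real \<times> real. (fst hh \<noteq> 0 \<and> \<bar>fst hh\<bar> < 1 / Suc m) \<and> (snd hh \<noteq> 0 \<and> \<bar>snd hh\<bar> < 1 / Suc m)}"
    for m :: nat
  define C where "C n m = (\<Inter>hh\<in>H m. {t. norm ((f (t + fst hh) - f t) /\<^sub>R fst hh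
      - (f (t + snd hh) - f t) /\<^sub>R snd hh) \<le> 1 / Suc n})" for n m :: nat
  have "closed (C n m)" for n m
    unfolding C_def
    by (intro closed_INT ballI closed_Collect_le continuous_intros continuous_on_compose2[OF f]) auto
  then have "(\<Inter>n. \<Union>m. C n m) \<in> sets borel" by (auto intro: borel_closed)
  moreover have "{t. f differentiable (at t)} = (\<Inter>n. \<Union>m. C n m)"
    unfolding differentiable_at_iff_quotient_Cauchy C_def H_def by auto
  ultimately show ?thesis by simp
qed

lemma vector_derivative_nondifferentiable:
  "\<not> f differentiable (at t) \<Longrightarrow> vector_derivative f (at t) = (SOME D. False)"
  unfolding vector_derivative_def by (metis differentiableI_vector)

lemma borel_measurable_vector_derivative:
  fixes f :: "real \<Rightarrow> 'a::euclidean_space"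
  assumes f: "continuous_on UNIV f"
  shows "(\<lambda>t. vector_derivative f (at t)) \<in> borel_measurable borel"
proof -
  define D where "D = {t. f differentiable (at t)}"
  have D: "D \<in> sets borel" unfolding D_def by (rule sets_borel_differentiable_points[OF f])
  define F where "F k t = (if t \<in> D then (f (t + inverse (Suc k)) - f t) /\<^sub>R inverse (Suc k)
      else (SOME D. False))" for k t
  have "F k \<in> borel_measurable borel" for k
    unfolding F_def by (rule measurable_If_set)
      (auto intro!: borel_measurable_continuous_onI continuous_intros continuous_on_compose2[OF f] simp: D)
  moreover have "(\<lambda>k. F k t) \<longlonglongrightarrow> vector_derivative f (at t)" for t
  proof (cases "t \<in> D")
    case True
    then have "(f has_vector_derivative vector_derivative f (at t)) (at t)"
      by (simp add: D_def vector_derivative_works)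
    then show ?thesis using has_vector_derivative_imp_quotient_seq True by (simp add: F_def)
  next
    case False
    then show ?thesis by (simp add: F_def D_def vector_derivative_nondifferentiable)
  qed
  ultimately show ?thesis by (rule borel_measurable_LIMSEQ_metric)
qed

lemma integral_difference_quotient_tendsto:
  fixes g :: "real \<Rightarrow> real"
  assumes g: "continuous_on UNIV g" and "a \<le> b"
  shows "(\<lambda>k. integral {a..b} (\<lambda>t. (g (t + inverse (Suc k)) - g t) / inverse (Suc k))) \<longlonglongrightarrow> g b - g a"
proof -
  define G where "G x = integral {a - 1..x} g" for x
  have G: "(G has_real_derivative g y) (at y)" if "a - 1 < y" for y
  proof -
    have "(G has_vector_derivative g y) (at y within {a - 1..y + 1})"
      unfolding G_def using g that
      by (intro integral_has_vector_derivative) (auto intro: continuous_on_subset)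
    moreover have "at y within {a - 1..y + 1} = at y" by (rule at_within_interior) (use that in auto)
    ultimately show ?thesis by (simp add: has_real_derivative_iff_has_vector_derivative)
  qed
  have G_quot: "(\<lambda>k. (G (y + inverse (Suc k)) - G y) / inverse (Suc k)) \<longlonglongrightarrow> g y" if "a - 1 < y" for y
    using has_vector_derivative_imp_quotient_seq[of G "g y" y] G[OF that]
    by (simp add: has_real_derivative_iff_has_vector_derivative divide_inverse mult.commute)
  have "((\<lambda>t. (g (t + h) - g t) / h) has_integral
      (G (b + h) - G b) / h - (G (a + h) - G a) / h) {a..b}" if h: "0 < h" for h
  proof -
    have "((\<lambda>t. (g (t + h) - g t) / h) has_integral
        (\<lambda>t. (G (t + h) - G t) / h) b - (\<lambda>t. (G (t + h) - G t) / h) a) {a..b}"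
    proof (rule fundamental_theorem_of_calculus[OF \<open>a \<le> b\<close>])
      fix t assume t: "t \<in> {a..b}"
      have "((\<lambda>t. G (t + h)) has_real_derivative g (t + h)) (at t)"
        using DERIV_shift[of G "g (t + h)" t h] G[of "t + h"] t h by simp
      then have "((\<lambda>t. (G (t + h) - G t) / h) has_real_derivative (g (t + h) - g t) / h) (at t)"
        using G[of t] t h by (intro derivative_eq_intros) auto
      then show "((\<lambda>t. (G (t + h) - G t) / h) has_vector_derivative (g (t + h) - g t) / h) (at t within {a..b})"
        by (simp add: has_real_derivative_iff_has_vector_derivative has_vector_derivative_at_within)
    qed
    then show ?thesis by (simp add: diff_divide_distrib)
  qed
  then have "integral {a..b} (\<lambda>t. (g (t + inverse (Suc k)) - g t) / inverse (Suc k)) =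
      (G (b + inverse (Suc k)) - G b) / inverse (Suc k) - (G (a + inverse (Suc k)) - G a) / inverse (Suc k)" for k
    by (intro integral_unique) simp
  then show ?thesis
    using tendsto_diff[OF G_quot[of b] G_quot[of a]] \<open>a \<le> b\<close> by simp
qed

lemma fundamental_theorem_of_calculus_lipschitz:
  fixes g g' :: "real \<Rightarrow> real"
  assumes g: "M-lipschitz_on UNIV g" and "a \<le> b" and N: "negligible N"
    and g': "\<And>t. t \<in> {a..b} - N \<Longrightarrow> (g has_real_derivative g' t) (at t)"
  shows "(g' has_integral g b - g a) {a..b}"
proof -
  define Q where "Q = (\<lambda>k t. (g (t + inverse (Suc k)) - g t) / inverse (Suc k))"
  have spike: "negligible {t \<in> ({a..b} - N) - {a..b}. F t \<noteq> 0}"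
    "negligible {t \<in> {a..b} - ({a..b} - N). F t \<noteq> 0}" for F :: "real \<Rightarrow> real"
    by (rule negligible_subset[of "{}"], force, simp) (rule negligible_subset[OF N], force)
  have Q_cont: "continuous_on UNIV (Q k)" for k
    unfolding Q_def by (intro continuous_intros continuous_on_compose2[OF lipschitz_on_continuous_on[OF g]]) auto
  have "(Q k has_integral integral {a..b} (Q k)) {a..b}" for k
    by (rule integrable_integral, rule integrable_continuous_interval, rule continuous_on_subset[OF Q_cont]) simp
  then have Q_int: "(Q k has_integral integral {a..b} (Q k)) ({a..b} - N)" for k
    using has_integral_spike_set_eq[OF spike] by blast
  have "(g' has_integral g b - g a) ({a..b} - N)"
  proof (rule has_integral_dominated_convergence[OF Q_int])
    show "(\<lambda>t. M) integrable_on {a..b} - N"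
      using has_integral_spike_set_eq[OF spike] integrable_const_ivl by (fastforce simp: integrable_on_def)
    show "\<forall>t\<in>{a..b} - N. norm (Q k t) \<le> M" for k
    proof
      fix t
      have "norm (Q k t) = \<bar>g (t + inverse (Suc k)) - g t\<bar> * Suc k"
        by (simp add: Q_def divide_inverse abs_mult)
      also have "\<dots> \<le> M * inverse (Suc k) * Suc k"
        using lipschitz_on_normD[OF g, of "t + inverse (Suc k)" t] by (intro mult_right_mono) auto
      also have "\<dots> = M" by simp
      finally show "norm (Q k t) \<le> M" .
    qed
    show "\<forall>t\<in>{a..b} - N. (\<lambda>k. Q k t) \<longlonglongrightarrow> g' t"
    proof
      fix t assume "t \<in> {a..b} - N"
      then have "(g has_vector_derivative g' t) (at t)"
        using g' by (simp add: has_real_derivative_iff_has_vector_derivative)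
      from has_vector_derivative_imp_quotient_seq[OF this] show "(\<lambda>k. Q k t) \<longlonglongrightarrow> g' t"
        by (simp add: Q_def divide_inverse mult.commute)
    qed
    show "(\<lambda>k. integral {a..b} (Q k)) \<longlonglongrightarrow> g b - g a"
      unfolding Q_def
      by (rule integral_difference_quotient_tendsto[OF lipschitz_on_continuous_on[OF g] \<open>a \<le> b\<close>])
  qed
  then show ?thesis using has_integral_spike_set_eq[OF spike] by blast
qed

lemma lipschitz_on_ext_cont:
  fixes f :: "real \<Rightarrow> 'a::metric_space"
  assumes f: "M-lipschitz_on {a..b} f" and "a \<le> b"
  shows "M-lipschitz_on UNIV (ext_cont f a b)"
proof -
  have "1-lipschitz_on UNIV (clamp a b)"
    by (rule lipschitz_onI) (auto simp: dist_clamps_le_dist_args)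
  moreover have "clamp a b ` UNIV \<subseteq> {a..b}" using \<open>a \<le> b\<close> clamp_in_interval[of a b] by auto
  then have "M-lipschitz_on (clamp a b ` UNIV) f" by (rule lipschitz_on_subset[OF f])
  ultimately show ?thesis
    using lipschitz_on_compose2[of 1 UNIV "clamp a b" M f] by (simp add: ext_cont_def)
qed

lemma has_vector_derivative_ext_cont_iff:
  fixes f :: "real \<Rightarrow> 'a::real_normed_vector"
  assumes t: "t \<in> {a<..<b}"
  shows "(ext_cont f a b has_vector_derivative D) (at t) \<longleftrightarrow> (f has_vector_derivative D) (at t)"
proof -
  have eq: "ext_cont f a b y = f y" if "y \<in> {a<..<b}" for y
    using that by (simp add: ext_cont_cancel_cbox)
  show ?thesis
    using has_vector_derivative_transform_within_open[of _ D t "{a<..<b}"] t eq by force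
qed

lemma ext_cont_differentiable_iff:
  fixes f :: "real \<Rightarrow> 'a::real_normed_vector"
  assumes "t \<in> {a<..<b}"
  shows "ext_cont f a b differentiable (at t) \<longleftrightarrow> f differentiable (at t)"
  using has_vector_derivative_ext_cont_iff[OF assms]
  by (metis differentiableI_vector vector_derivative_works)

lemma vector_derivative_ext_cont:
  fixes f :: "real \<Rightarrow> 'a::real_normed_vector"
  assumes "t \<in> {a<..<b}"
  shows "vector_derivative (ext_cont f a b) (at t) = vector_derivative f (at t)"
  unfolding vector_derivative_def has_vector_derivative_ext_cont_iff[OF assms] ..

lemma lipschitz_on_inner:
  fixes f g :: "'b::metric_space \<Rightarrow> 'a::real_inner"
  assumes f: "Mf-lipschitz_on UNIV f" "\<And>x. norm (f x) \<le> Bf"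
    and g: "Mg-lipschitz_on UNIV g" "\<And>x. norm (g x) \<le> Bg"
  shows "(Mf * Bg + Bf * Mg)-lipschitz_on UNIV (\<lambda>x. f x \<bullet> g x)"
proof (rule lipschitz_onI)
  fix x y
  have "f x \<bullet> g x - f y \<bullet> g y = (f x - f y) \<bullet> g x + f y \<bullet> (g x - g y)"
    by (simp add: inner_diff_left inner_diff_right)
  then have "\<bar>f x \<bullet> g x - f y \<bullet> g y\<bar> \<le> norm (f x - f y) * norm (g x) + norm (f y) * norm (g x - g y)"
    by (smt (verit) Cauchy_Schwarz_ineq2)
  also have "\<dots> \<le> (Mf * dist x y) * Bg + Bf * (Mg * dist x y)"
    using lipschitz_onD[OF f(1), of x y] lipschitz_onD[OF g(1), of x y] f(2)[of y] g(2)[of x]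
    by (intro add_mono mult_mono) (auto simp: dist_norm intro: order_trans[OF norm_ge_zero])
  finally show "dist (f x \<bullet> g x) (f y \<bullet> g y) \<le> (Mf * Bg + Bf * Mg) * dist x y"
    by (simp add: dist_real_def algebra_simps)
next
  show "0 \<le> Mf * Bg + Bf * Mg"
    using lipschitz_on_nonneg[OF f(1)] lipschitz_on_nonneg[OF g(1)]
      order_trans[OF norm_ge_zero f(2)] order_trans[OF norm_ge_zero g(2)]
    by simp
qed

lemma lipschitz_on_interval_bounded:
  fixes f :: "real \<Rightarrow> 'a::real_normed_vector"
  assumes "M-lipschitz_on {a..b} f"
  shows "\<exists>B. \<forall>t\<in>{a..b}. norm (f t) \<le> B"
proof -
  have "bounded (f ` {a..b})"
    by (intro compact_imp_bounded compact_continuous_image lipschitz_on_continuous_on[OF assms]) auto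
  then show ?thesis by (auto simp: bounded_iff)
qed

lemma AE_lborel_negligibleE:
  assumes "AE x in lborel. P x"
  obtains N where "negligible N" "\<And>x. x \<notin> N \<Longrightarrow> P x"
proof -
  obtain N where N: "{x \<in> space lborel. \<not> P x} \<subseteq> N" "emeasure lborel N = 0" "N \<in> sets lborel"
    using AE_E[OF assms] by blast
  then have "negligible N" by (auto simp: negligible_iff_null_sets intro: null_sets_completionI)
  then show ?thesis using that N(1) by auto
qed

lemma has_integral_inner_derivative:
  fixes u v :: "real \<Rightarrow> 'a::euclidean_space"
  assumes "a \<le> b" and u: "Mu-lipschitz_on {a..b} u" and v: "Mv-lipschitz_on {a..b} v"
    and diff: "AE t in lborel. t \<in> {a<..<b} \<longrightarrow> u differentiable (at t) \<and> v differentiable (at t)"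
  shows "((\<lambda>t. vector_derivative u (at t) \<bullet> v t + u t \<bullet> vector_derivative v (at t))
      has_integral u b \<bullet> v b - u a \<bullet> v a) {a..b}"
proof -
  obtain N where N: "negligible N"
    and diff: "\<And>t. t \<notin> N \<Longrightarrow> t \<in> {a<..<b} \<longrightarrow> u differentiable (at t) \<and> v differentiable (at t)"
    using AE_lborel_negligibleE[OF diff] by blast
  obtain Bu where Bu: "\<And>t. t \<in> {a..b} \<Longrightarrow> norm (u t) \<le> Bu"
    using lipschitz_on_interval_bounded[OF u] by blast
  obtain Bv where Bv: "\<And>t. t \<in> {a..b} \<Longrightarrow> norm (v t) \<le> Bv"
    using lipschitz_on_interval_bounded[OF v] by blast
  define ue where "ue = ext_cont u a b"
  define ve where "ve = ext_cont v a b"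
  have clamp: "clamp a b x \<in> {a..b}" for x using \<open>a \<le> b\<close> clamp_in_interval[of a b x] by simp
  have "(Mu * Bv + Bu * Mv)-lipschitz_on UNIV (\<lambda>t. ue t \<bullet> ve t)"
    unfolding ue_def ve_def using \<open>a \<le> b\<close> clamp
    by (intro lipschitz_on_inner lipschitz_on_ext_cont u v) (auto simp: ext_cont_def intro: Bu Bv)
  then have "((\<lambda>t. vector_derivative u (at t) \<bullet> v t + u t \<bullet> vector_derivative v (at t))
      has_integral ue b \<bullet> ve b - ue a \<bullet> ve a) {a..b}"
  proof (rule fundamental_theorem_of_calculus_lipschitz[OF _ \<open>a \<le> b\<close>, where N="N \<union> {a, b}"])
    show "negligible (N \<union> {a, b})" using N by simp
    fix t assume "t \<in> {a..b} - (N \<union> {a, b})"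
    then have t: "t \<in> {a<..<b}" "t \<notin> N" by auto
    have "(ue has_vector_derivative vector_derivative u (at t)) (at t)"
      "(ve has_vector_derivative vector_derivative v (at t)) (at t)"
      using diff[of t] t unfolding ue_def ve_def has_vector_derivative_ext_cont_iff[OF t(1)]
      by (auto simp: vector_derivative_works[symmetric])
    from bounded_bilinear.has_vector_derivative[OF bounded_bilinear_inner this]
    have "((\<lambda>t. ue t \<bullet> ve t) has_vector_derivative
        ue t \<bullet> vector_derivative v (at t) + vector_derivative u (at t) \<bullet> ve t) (at t)" .
    moreover have "ue t = u t" "ve t = v t" using t by (auto simp: ue_def ve_def)
    ultimately show "((\<lambda>t. ue t \<bullet> ve t) has_real_derivative
        vector_derivative u (at t) \<bullet> v t + u t \<bullet> vector_derivative v (at t)) (at t)"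
      by (simp add: has_real_derivative_iff_has_vector_derivative add.commute)
  qed
  moreover have "ue a = u a" "ue b = u b" "ve a = v a" "ve b = v b"
    using \<open>a \<le> b\<close> by (auto simp: ue_def ve_def)
  ultimately show ?thesis by simp
qed

section \<open>The curvature functional and the reparametrised density\<close>
lemma Kinf_nonpos_length: "L \<le> 0 \<Longrightarrow> Kinf L f = -\<infinity>"
proof -
  assume "L \<le> 0"
  then have e: "{0<..<L} = {}" by auto
  have "esssup (restrict_space lborel {}) (\<lambda>t. ereal (norm (vector_derivative f (at t)))) = -\<infinity>"
    by (intro esssup_zero_space) (auto simp: space_restrict_space intro: measurableI)
  then show ?thesis unfolding Kinf_def e .
qed

lemma Kinf_nonneg: "0 < L \<Longrightarrow> 0 \<le> Kinf L f"
proof -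
  assume "0 < L"
  define M where "M = restrict_space (lborel :: real measure) {0<..<L}"
  have "emeasure M (space M) = ennreal L"
    using \<open>0 < L\<close> by (simp add: M_def space_restrict_space emeasure_restrict_space)
  then have "esssup M (\<lambda>t. 0 :: ereal) = 0" using \<open>0 < L\<close> by (intro esssup_const) simp
  moreover have "esssup M (\<lambda>t. 0 :: ereal) \<le> esssup M (\<lambda>t. ereal (norm (vector_derivative f (at t))))"
    by (rule esssup_mono) auto
  ultimately show ?thesis by (simp add: Kinf_def M_def)
qed

lemma AE_lipschitz_differentiable:
  fixes f :: "real \<Rightarrow> 'a::euclidean_space"
  assumes "M-lipschitz_on UNIV f"
  shows "AE t in lborel. f differentiable (at t)"
proof -
  have "AE t in lebesgue. f differentiable (at t)"
    by (rule AE_I'[OF lipschitz_differentiable_ae[OF assms]]) auto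
  then show ?thesis by (simp add: AE_completion_iff)
qed

lemma Kinf_measurable:
  fixes \<tau> :: "real \<Rightarrow> 'a::euclidean_space"
  assumes \<tau>: "M-lipschitz_on {0..L} \<tau>" and "0 \<le> L"
  shows "(\<lambda>t. ereal (norm (vector_derivative \<tau> (at t)))) \<in> borel_measurable (restrict_space lborel {0<..<L})"
proof -
  have "continuous_on UNIV (ext_cont \<tau> 0 L)"
    by (rule lipschitz_on_continuous_on[OF lipschitz_on_ext_cont[OF \<tau> \<open>0 \<le> L\<close>]])
  then have "(\<lambda>t. ereal (norm (vector_derivative (ext_cont \<tau> 0 L) (at t)))) \<in> borel_measurable lborel"
    using borel_measurable_vector_derivative by measurable
  then have "(\<lambda>t. ereal (norm (vector_derivative (ext_cont \<tau> 0 L) (at t))))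
      \<in> borel_measurable (restrict_space lborel {0<..<L})"
    by (rule measurable_restrict_space1)
  then show ?thesis
    by (rule measurable_cong[THEN iffD1, rotated])
      (simp add: space_restrict_space vector_derivative_ext_cont)
qed

lemma Kinf_le_lipschitz:
  fixes \<tau> :: "real \<Rightarrow> 'a::euclidean_space"
  assumes \<tau>: "M-lipschitz_on {0..L} \<tau>" and "0 \<le> L"
  shows "Kinf L \<tau> \<le> ereal M"
  unfolding Kinf_def
proof (rule esssup_I[OF Kinf_measurable[OF assms]])
  have lip: "M-lipschitz_on UNIV (ext_cont \<tau> 0 L)" by (rule lipschitz_on_ext_cont[OF \<tau> \<open>0 \<le> L\<close>])
  have "AE t in lborel. t \<in> {0<..<L} \<longrightarrow> ereal (norm (vector_derivative \<tau> (at t))) \<le> ereal M"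
    using AE_lipschitz_differentiable[OF lip]
  proof eventually_elim
    case (elim t)
    show ?case
    proof
      assume t: "t \<in> {0<..<L}"
      then have "(ext_cont \<tau> 0 L has_vector_derivative vector_derivative \<tau> (at t)) (at t)"
        using elim vector_derivative_works vector_derivative_ext_cont[OF t] by metis
      then show "ereal (norm (vector_derivative \<tau> (at t))) \<le> ereal M"
        using lipschitz_vector_derivative_bound[OF lip] by simp
    qed
  qed
  then show "AE t in restrict_space lborel {0<..<L}. ereal (norm (vector_derivative \<tau> (at t))) \<le> ereal M"
    by (subst AE_restrict_space_iff) auto
qed

lemma AE_norm_vector_derivative_le_Kinf:
  assumes "Kinf L \<sigma> = ereal K"
  shows "AE t in lborel. t \<in> {0<..<L} \<longrightarrow> norm (vector_derivative \<sigma> (at t)) \<le> K"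
proof -
  have "AE t in restrict_space lborel {0<..<L}. ereal (norm (vector_derivative \<sigma> (at t))) \<le> Kinf L \<sigma>"
    unfolding Kinf_def by (rule esssup_AE)
  then show ?thesis using assms by (subst (asm) AE_restrict_space_iff) auto
qed

lemma bounded_variation_on_le:
  assumes "bounded_variation_on f a b"
  shows "\<exists>A. \<forall>s\<in>{a..b}. f s \<le> A"
proof -
  obtain B where B: "\<And>xs. sorted xs \<Longrightarrow> set xs \<subseteq> {a..b} \<Longrightarrow>
      (\<Sum>(x, y)\<leftarrow>zip xs (tl xs). \<bar>f y - f x\<bar>) \<le> B"
    using assms unfolding bounded_variation_on_def by blast
  have "f s \<le> f a + B" if "s \<in> {a..b}" for s
    using B[of "[a, s]"] that by auto
  then show ?thesis by blast
qed

lemma phi_in_interval: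
  assumes "0 \<le> ell" and L: "0 < Lpar \<alpha> ell" and \<alpha>: "\<And>s. s \<in> {0..ell} \<Longrightarrow> 0 < \<alpha> s \<and> \<alpha> s \<le> A"
    and t: "t \<in> {0..Lpar \<alpha> ell}"
  shows "phi \<alpha> ell t \<in> {0..ell}"
proof -
  have int: "(\<lambda>\<sigma>. 1 / \<alpha> \<sigma>) integrable_on {0..ell}"
    using L not_integrable_integral by (force simp: Lpar_def psi_def)
  have A: "0 < A" using \<alpha>[of 0] \<open>0 \<le> ell\<close> by auto
  \<comment> \<open>psi increases at least with slope 1 / A\<close>
  have psi_less: "psi \<alpha> s < psi \<alpha> s'" if "0 \<le> s" "s < s'" "s' \<le> ell" for s s'
  proof -
    have "integral {0..s} (\<lambda>\<sigma>. 1 / \<alpha> \<sigma>) + integral {s..s'} (\<lambda>\<sigma>. 1 / \<alpha> \<sigma>)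
        = integral {0..s'} (\<lambda>\<sigma>. 1 / \<alpha> \<sigma>)"
      using that by (intro Henstock_Kurzweil_Integration.integral_combine integrable_subinterval_real[OF int]) auto
    moreover have "(s' - s) / A \<le> integral {s..s'} (\<lambda>\<sigma>. 1 / \<alpha> \<sigma>)"
      using integral_le[of "\<lambda>_. 1 / A" "{s..s'}" "\<lambda>\<sigma>. 1 / \<alpha> \<sigma>"] that \<alpha> A
        integrable_subinterval_real[OF int, of s s']
      by (force intro: frac_le)
    moreover have "0 < (s' - s) / A" using that A by simp
    ultimately show ?thesis by (simp add: psi_def)
  qed
  have "inj_on (psi \<alpha>) {0..ell}"
    by (rule inj_onI) (metis atLeastAtMost_iff linorder_neqE_linordered_idom psi_less order_less_irrefl)
  moreover have "continuous_on {0..ell} (psi \<alpha>)"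
    unfolding psi_def using int by (rule indefinite_integral_continuous_1)
  then have "t \<in> psi \<alpha> ` {0..ell}"
    using IVT'[of "psi \<alpha>" 0 t ell] t \<open>0 \<le> ell\<close> by (force simp: Lpar_def psi_def)
  ultimately show ?thesis unfolding phi_def by (rule the_inv_into_into) simp
qed

lemma beta_bounds:
  assumes "0 \<le> ell" and \<alpha>_pos: "\<forall>s\<in>{0..ell}. 0 < \<alpha> s" and \<alpha>_bv: "bounded_variation_on \<alpha> 0 ell"
    and \<alpha>_inv: "\<exists>C. \<forall>s\<in>{0..ell}. 1 / \<alpha> s \<le> C" and L: "0 < Lpar \<alpha> ell"
  obtains b A where "0 < b" "\<And>t. t \<in> {0..Lpar \<alpha> ell} \<Longrightarrow> b \<le> beta \<alpha> ell t \<and> beta \<alpha> ell t \<le> A"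
proof -
  obtain C where C: "\<And>s. s \<in> {0..ell} \<Longrightarrow> 1 / \<alpha> s \<le> C" using \<alpha>_inv by blast
  obtain A where A: "\<And>s. s \<in> {0..ell} \<Longrightarrow> \<alpha> s \<le> A" using bounded_variation_on_le[OF \<alpha>_bv] by blast
  have C0: "0 < C" using C[of 0] \<alpha>_pos \<open>0 \<le> ell\<close> by (smt (verit) atLeastAtMost_iff divide_pos_pos)
  have "1 / C \<le> \<alpha> s \<and> \<alpha> s \<le> A" if "s \<in> {0..ell}" for s
    using C[OF that] A[OF that] \<alpha>_pos that C0 by (auto simp: field_simps)
  moreover have "phi \<alpha> ell t \<in> {0..ell}" if "t \<in> {0..Lpar \<alpha> ell}" for t
    using \<alpha>_pos A by (intro phi_in_interval[OF \<open>0 \<le> ell\<close> L _ that]) auto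
  ultimately show ?thesis using C0 by (intro that[of "1 / C" A]) (auto simp: beta_def)
qed

section \<open>The adjoint estimate\<close>
lemma adjoint_pointwise_estimate:
  fixes T S U dU dT dS lam :: "'a::real_inner"
  assumes T: "norm T = 1" and S: "norm S = 1"
    and eq1: "dU + (U \<bullet> dT) *\<^sub>R T = b *\<^sub>R (lam - (lam \<bullet> T) *\<^sub>R T)"
    and eq2: "norm U *\<^sub>R dT = k *\<^sub>R U"
    and dS: "norm dS \<le> K"
    and w: "b * (lam \<bullet> T) + k * norm U \<le> c * b"
  shows "k * norm U \<le> b * (lam \<bullet> (S - T)) + c / 2 * (b * (norm (S - T))\<^sup>2) + K * norm U
           - ((dU \<bullet> S + U \<bullet> dS) - (dU \<bullet> T + U \<bullet> dT))"
proof -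
  have UdT: "U \<bullet> dT = k * norm U"
  proof (cases "U = 0")
    case False
    have "norm U * (U \<bullet> dT) = k * (norm U * norm U)"
      using arg_cong[OF eq2, of "\<lambda>x. x \<bullet> U"]
      by (simp add: inner_commute power2_eq_square[symmetric] dot_square_norm)
    then show ?thesis using False by (simp add: mult.assoc)
  qed simp
  have dU: "dU = b *\<^sub>R (lam - (lam \<bullet> T) *\<^sub>R T) - (k * norm U) *\<^sub>R T"
    using eq1 UdT by (simp add: eq_diff_eq)
  have TT: "T \<bullet> T = 1" and SS: "S \<bullet> S = 1" using T S by (simp_all add: dot_square_norm)
  have nsq: "(norm (S - T))\<^sup>2 = 2 - 2 * (T \<bullet> S)"
    using TT SS by (simp add: power2_norm_eq_inner inner_diff_left inner_diff_right inner_commute)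
  have dUS: "dU \<bullet> S = b * (lam \<bullet> S) - b * (lam \<bullet> T) * (T \<bullet> S) - k * norm U * (T \<bullet> S)"
    by (simp add: dU inner_diff_left algebra_simps)
  have dUT: "dU \<bullet> T = - (k * norm U)"
    using TT by (simp add: dU inner_diff_left algebra_simps)
  have "U \<bullet> dS \<le> norm U * norm dS" by (rule norm_cauchy_schwarz)
  also have "\<dots> \<le> norm U * K" using dS by (intro mult_left_mono) auto
  finally have UdS: "U \<bullet> dS \<le> K * norm U" by (simp add: mult.commute)
  have "T \<bullet> S \<le> 1" using norm_cauchy_schwarz[of T S] T S by simp
  then have P: "0 \<le> (c * b - (b * (lam \<bullet> T) + k * norm U)) * (1 - T \<bullet> S)"
    using w by (intro mult_nonneg_nonneg) auto
  have "b * (lam \<bullet> (S - T)) + c / 2 * (b * (norm (S - T))\<^sup>2) + K * norm U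
      - ((dU \<bullet> S + U \<bullet> dS) - (dU \<bullet> T + U \<bullet> dT)) - k * norm U
      = (c * b - (b * (lam \<bullet> T) + k * norm U)) * (1 - T \<bullet> S) + (K * norm U - U \<bullet> dS)"
    unfolding nsq dUS dUT UdT inner_diff_right by (simp add: field_simps)
  then show ?thesis using P UdS by linarith
qed

lemma has_integral_le_AE:
  fixes f g :: "real \<Rightarrow> real"
  assumes "(f has_integral i) S" "(g has_integral j) S" "AE x in lborel. x \<in> S \<longrightarrow> f x \<le> g x"
  shows "i \<le> j"
proof -
  obtain N where N: "negligible N" "\<And>x. x \<notin> N \<Longrightarrow> x \<in> S \<longrightarrow> f x \<le> g x"
    using AE_lborel_negligibleE[OF assms(3)] by blast
  have "((\<lambda>x. if x \<in> N then 0 else f x) has_integral i) S"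
    "((\<lambda>x. if x \<in> N then 0 else g x) has_integral j) S"
    by (rule has_integral_spike[OF N(1) _ assms(1)], simp,
        rule has_integral_spike[OF N(1) _ assms(2)], simp)
  then show ?thesis by (rule has_integral_le) (use N(2) in auto)
qed

lemma adjoint_integral_estimate:
  fixes \<tau> \<sigma> u :: "real \<Rightarrow> 'a::euclidean_space"
  assumes L: "0 < L"
    and lip: "M\<tau>-lipschitz_on {0..L} \<tau>" "M\<sigma>-lipschitz_on {0..L} \<sigma>" "Mu-lipschitz_on {0..L} u"
    and sphere: "\<forall>t\<in>{0..L}. norm (\<tau> t) = 1" "\<forall>t\<in>{0..L}. norm (\<sigma> t) = 1"
    and ends: "\<sigma> 0 = \<tau> 0" "\<sigma> L = \<tau> L"
    and int: "((\<lambda>t. \<beta> t *\<^sub>R \<tau> t) has_integral a) {0..L}" "((\<lambda>t. \<beta> t *\<^sub>R \<sigma> t) has_integral a) {0..L}"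
    and eqs: "AE t in lborel. t \<in> {0<..<L} \<longrightarrow> u differentiable (at t) \<and> \<tau> differentiable (at t) \<and>
          vector_derivative u (at t) + (u t \<bullet> vector_derivative \<tau> (at t)) *\<^sub>R \<tau> t
            = \<beta> t *\<^sub>R (lam - (lam \<bullet> \<tau> t) *\<^sub>R \<tau> t) \<and>
          norm (u t) *\<^sub>R vector_derivative \<tau> (at t) = k *\<^sub>R u t"
    and K: "AE t in lborel. t \<in> {0<..<L} \<longrightarrow> norm (vector_derivative \<sigma> (at t)) \<le> K"
    and w: "\<forall>t\<in>{0..L}. \<beta> t * (lam \<bullet> \<tau> t) + k * norm (u t) \<le> c * \<beta> t"
    and dist_int: "(\<lambda>t. \<beta> t * (norm (\<sigma> t - \<tau> t))\<^sup>2) integrable_on {0..L}"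
  shows "k * integral {0..L} (\<lambda>t. norm (u t)) \<le>
    c / 2 * integral {0..L} (\<lambda>t. \<beta> t * (norm (\<sigma> t - \<tau> t))\<^sup>2) + K * integral {0..L} (\<lambda>t. norm (u t))"
proof -
  have "AE t in lborel. ext_cont \<sigma> 0 L differentiable (at t)"
    by (rule AE_lipschitz_differentiable[OF lipschitz_on_ext_cont[OF lip(2) less_imp_le[OF L]]])
  with eqs have diff_\<sigma>: "AE t in lborel. t \<in> {0<..<L} \<longrightarrow> u differentiable (at t) \<and> \<sigma> differentiable (at t)"
    by eventually_elim (auto simp: ext_cont_differentiable_iff)
  from eqs have diff_\<tau>: "AE t in lborel. t \<in> {0<..<L} \<longrightarrow> u differentiable (at t) \<and> \<tau> differentiable (at t)"
    by eventually_elim auto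
  have "((\<lambda>t. (vector_derivative u (at t) \<bullet> \<sigma> t + u t \<bullet> vector_derivative \<sigma> (at t))
      - (vector_derivative u (at t) \<bullet> \<tau> t + u t \<bullet> vector_derivative \<tau> (at t)))
      has_integral (u L \<bullet> \<sigma> L - u 0 \<bullet> \<sigma> 0) - (u L \<bullet> \<tau> L - u 0 \<bullet> \<tau> 0)) {0..L}"
    using L by (intro has_integral_diff has_integral_inner_derivative[OF _ lip(3) lip(2) diff_\<sigma>]
        has_integral_inner_derivative[OF _ lip(3) lip(1) diff_\<tau>]) auto
  \<comment> \<open>both inner products u \<bullet> \<sigma> and u \<bullet> \<tau> have the same boundary values\<close>
  then have I_uv: "((\<lambda>t. (vector_derivative u (at t) \<bullet> \<sigma> t + u t \<bullet> vector_derivative \<sigma> (at t))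
      - (vector_derivative u (at t) \<bullet> \<tau> t + u t \<bullet> vector_derivative \<tau> (at t))) has_integral 0) {0..L}"
    using ends by simp
  have "((\<lambda>t. lam \<bullet> (\<beta> t *\<^sub>R \<sigma> t - \<beta> t *\<^sub>R \<tau> t)) has_integral lam \<bullet> (a - a)) {0..L}"
    using has_integral_linear[OF has_integral_diff[OF int(2,1)] bounded_linear_inner_right[of lam]]
    by (simp add: o_def)
  then have I_lam: "((\<lambda>t. \<beta> t * (lam \<bullet> (\<sigma> t - \<tau> t))) has_integral 0) {0..L}"
    by (simp add: inner_diff_right right_diff_distrib)
  have I_u: "((\<lambda>t. norm (u t)) has_integral integral {0..L} (\<lambda>t. norm (u t))) {0..L}"
    using lipschitz_on_continuous_on[OF lip(3)]
    by (intro integrable_integral integrable_continuous_interval continuous_intros)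
  have I_dist: "((\<lambda>t. \<beta> t * (norm (\<sigma> t - \<tau> t))\<^sup>2) has_integral
      integral {0..L} (\<lambda>t. \<beta> t * (norm (\<sigma> t - \<tau> t))\<^sup>2)) {0..L}"
    using dist_int by (rule integrable_integral)
  have "k * integral {0..L} (\<lambda>t. norm (u t)) \<le>
      0 + c / 2 * integral {0..L} (\<lambda>t. \<beta> t * (norm (\<sigma> t - \<tau> t))\<^sup>2)
        + K * integral {0..L} (\<lambda>t. norm (u t)) - 0"
  proof (rule has_integral_le_AE[OF has_integral_mult_right[OF I_u]])
    show "((\<lambda>t. \<beta> t * (lam \<bullet> (\<sigma> t - \<tau> t)) + c / 2 * (\<beta> t * (norm (\<sigma> t - \<tau> t))\<^sup>2)
        + K * norm (u t) - ((vector_derivative u (at t) \<bullet> \<sigma> t + u t \<bullet> vector_derivative \<sigma> (at t))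
          - (vector_derivative u (at t) \<bullet> \<tau> t + u t \<bullet> vector_derivative \<tau> (at t))))
        has_integral 0 + c / 2 * integral {0..L} (\<lambda>t. \<beta> t * (norm (\<sigma> t - \<tau> t))\<^sup>2)
          + K * integral {0..L} (\<lambda>t. norm (u t)) - 0) {0..L}"
      by (intro has_integral_diff has_integral_add I_lam I_uv has_integral_mult_right I_u I_dist)
    show "AE t in lborel. t \<in> {0..L} \<longrightarrow> k * norm (u t) \<le> \<beta> t * (lam \<bullet> (\<sigma> t - \<tau> t))
        + c / 2 * (\<beta> t * (norm (\<sigma> t - \<tau> t))\<^sup>2) + K * norm (u t)
        - ((vector_derivative u (at t) \<bullet> \<sigma> t + u t \<bullet> vector_derivative \<sigma> (at t))
          - (vector_derivative u (at t) \<bullet> \<tau> t + u t \<bullet> vector_derivative \<tau> (at t)))"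
      using eqs K AE_lborel_singleton[of 0] AE_lborel_singleton[of L]
    proof eventually_elim
      case (elim t)
      then show ?case using sphere w by (intro impI adjoint_pointwise_estimate) auto
    qed
  qed
  then show ?thesis by simp
qed

lemma integral_norm_pos:
  fixes f :: "real \<Rightarrow> 'a::real_normed_vector"
  assumes "continuous_on {a..b} f" "a < b" "t \<in> {a..b}" "f t \<noteq> 0"
  shows "0 < integral {a..b} (\<lambda>t. norm (f t))"
proof -
  have cont: "continuous_on {a..b} (\<lambda>t. norm (f t))" using assms(1) by (intro continuous_intros)
  then have int: "((\<lambda>t. norm (f t)) has_integral integral {a..b} (\<lambda>t. norm (f t))) {a..b}"
    by (intro integrable_integral integrable_continuous_interval)
  have "0 \<le> integral {a..b} (\<lambda>t. norm (f t))" by (rule has_integral_nonneg[OF int]) simp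
  moreover have "integral {a..b} (\<lambda>t. norm (f t)) \<noteq> 0"
  proof
    assume "integral {a..b} (\<lambda>t. norm (f t)) = 0"
    then have "norm (f t) = 0"
      using has_integral_0_cbox_imp_0[of a b "\<lambda>t. norm (f t)" t] int cont assms(2,3) by auto
    with assms(4) show False by simp
  qed
  ultimately show ?thesis by simp
qed

lemma borel_measurable_density_of_sphere_curve:
  fixes \<tau> :: "real \<Rightarrow> 'a::euclidean_space"
  assumes "((\<lambda>t. \<beta> t *\<^sub>R \<tau> t) has_integral a) S" "continuous_on S \<tau>" "S \<in> sets lebesgue"
    and "\<forall>t\<in>S. norm (\<tau> t) = 1"
  shows "\<beta> \<in> borel_measurable (lebesgue_on S)"
proof -
  have "(\<lambda>t. \<beta> t *\<^sub>R \<tau> t) \<in> borel_measurable (lebesgue_on S)"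
    using assms(1) by (intro integrable_imp_measurable) blast
  moreover have "\<tau> \<in> borel_measurable (lebesgue_on S)"
    by (rule continuous_imp_measurable_on_sets_lebesgue[OF assms(2,3)])
  ultimately have "(\<lambda>t. (\<beta> t *\<^sub>R \<tau> t) \<bullet> \<tau> t) \<in> borel_measurable (lebesgue_on S)"
    by (rule borel_measurable_inner)
  then show ?thesis
    by (rule measurable_cong[THEN iffD1, rotated]) (use assms(4) in \<open>simp add: dot_square_norm\<close>)
qed

lemma admissible_adjoint_estimate:
  fixes \<tau> \<sigma> u :: "real \<Rightarrow> 'a::euclidean_space"
  assumes L: "0 < L" and \<beta>: "\<And>t. t \<in> {0..L} \<Longrightarrow> 0 \<le> \<beta> t \<and> \<beta> t \<le> A"
    and \<tau>: "W1inf L \<tau>" "sphere_valued L \<tau>" "constraintsC L \<beta> T1 T2 a \<tau>"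
    and \<sigma>: "W1inf L \<sigma>" "sphere_valued L \<sigma>" "constraintsC L \<beta> T1 T2 a \<sigma>"
    and u: "W1inf L u"
    and eqs: "AE t in lborel. t \<in> {0<..<L} \<longrightarrow> u differentiable (at t) \<and> \<tau> differentiable (at t) \<and>
          vector_derivative u (at t) + (u t \<bullet> vector_derivative \<tau> (at t)) *\<^sub>R \<tau> t
            = \<beta> t *\<^sub>R (lam - (lam \<bullet> \<tau> t) *\<^sub>R \<tau> t) \<and>
          norm (u t) *\<^sub>R vector_derivative \<tau> (at t) = k *\<^sub>R u t"
    and K: "Kinf L \<sigma> = ereal K"
    and w: "\<forall>t\<in>{0..L}. \<beta> t * (lam \<bullet> \<tau> t) + k * norm (u t) \<le> c * \<beta> t"
  shows "k * integral {0..L} (\<lambda>t. norm (u t)) \<le>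
    c / 2 * integral {0..L} (\<lambda>t. \<beta> t * (norm (\<sigma> t - \<tau> t))\<^sup>2) + K * integral {0..L} (\<lambda>t. norm (u t))"
proof -
  obtain M\<tau> M\<sigma> Mu where lip: "M\<tau>-lipschitz_on {0..L} \<tau>" "M\<sigma>-lipschitz_on {0..L} \<sigma>" "Mu-lipschitz_on {0..L} u"
    using \<tau>(1) \<sigma>(1) u by (auto simp: W1inf_def)
  have sphere: "\<forall>t\<in>{0..L}. norm (\<tau> t) = 1" "\<forall>t\<in>{0..L}. norm (\<sigma> t) = 1"
    using \<tau>(2) \<sigma>(2) by (simp_all add: sphere_valued_def)
  have C: "\<tau> 0 = T1" "\<tau> L = T2" "((\<lambda>t. \<beta> t *\<^sub>R \<tau> t) has_integral a) {0..L}"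
    "\<sigma> 0 = T1" "\<sigma> L = T2" "((\<lambda>t. \<beta> t *\<^sub>R \<sigma> t) has_integral a) {0..L}"
    using \<tau>(3) \<sigma>(3) by (auto simp: constraintsC_def)
  have cont: "continuous_on {0..L} \<tau>" "continuous_on {0..L} \<sigma>"
    using lip(1,2) by (auto intro: lipschitz_on_continuous_on)
  have "\<beta> \<in> borel_measurable (lebesgue_on {0..L})"
    by (rule borel_measurable_density_of_sphere_curve[OF C(3) cont(1) _ sphere(1)]) simp
  moreover have "\<sigma> \<in> borel_measurable (lebesgue_on {0..L})" "\<tau> \<in> borel_measurable (lebesgue_on {0..L})"
    using cont by (auto intro: continuous_imp_measurable_on_sets_lebesgue)
  ultimately have meas: "(\<lambda>t. \<beta> t * (norm (\<sigma> t - \<tau> t))\<^sup>2) \<in> borel_measurable (lebesgue_on {0..L})"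
    by measurable
  have bnd: "norm (\<beta> t * (norm (\<sigma> t - \<tau> t))\<^sup>2) \<le> A * 4" if "t \<in> {0..L}" for t
  proof -
    have "norm (\<sigma> t - \<tau> t) \<le> 2" using norm_triangle_ineq4[of "\<sigma> t" "\<tau> t"] sphere that by simp
    then have "(norm (\<sigma> t - \<tau> t))\<^sup>2 \<le> 2\<^sup>2" by (intro power_mono) auto
    then show ?thesis using \<beta>[OF that] by (simp add: abs_mult mult_mono)
  qed
  have "(\<lambda>t. \<beta> t * (norm (\<sigma> t - \<tau> t))\<^sup>2) integrable_on {0..L}"
    by (rule measurable_bounded_by_integrable_imp_integrable[OF meas _ bnd]) auto
  then show ?thesis
    using adjoint_integral_estimate[OF L lip sphere _ _ C(3,6) eqs AE_norm_vector_derivative_le_Kinf[OF K] w] C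
    by simp
qed

lemma adjoint_weight_bound:
  fixes T lam :: "'a::real_inner"
  assumes "0 < b" "b \<le> \<beta>" "norm T = 1" "norm U \<le> B" "0 \<le> k"
  shows "\<beta> * (lam \<bullet> T) + k * norm U \<le> (norm lam + k * B / b) * \<beta>"
proof -
  have "lam \<bullet> T \<le> norm lam" using norm_cauchy_schwarz[of lam T] assms(3) by simp
  then have lam: "\<beta> * (lam \<bullet> T) \<le> \<beta> * norm lam" using assms(1,2) by (intro mult_left_mono) auto
  have "1 \<le> \<beta> / b" using assms(1,2) by simp
  have "k * norm U \<le> k * B" by (rule mult_left_mono[OF assms(4,5)])
  also have "\<dots> \<le> k * B * (\<beta> / b)"
    using mult_left_mono[OF \<open>1 \<le> \<beta> / b\<close>, of "k * B"] assms(5) order_trans[OF norm_ge_zero assms(4)]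
    by simp
  finally show ?thesis using lam by (simp add: algebra_simps)
qed

lemma Kinf_real:
  fixes \<tau> :: "real \<Rightarrow> 'a::euclidean_space"
  assumes "0 < L" "W1inf L \<tau>"
  shows "Kinf L \<tau> = ereal (real_of_ereal (Kinf L \<tau>))" "0 \<le> real_of_ereal (Kinf L \<tau>)"
proof -
  obtain M where "M-lipschitz_on {0..L} \<tau>" using assms(2) by (auto simp: W1inf_def)
  then have "Kinf L \<tau> \<le> ereal M" using assms(1) by (intro Kinf_le_lipschitz) auto
  with Kinf_nonneg[OF assms(1), of \<tau>]
  show "Kinf L \<tau> = ereal (real_of_ereal (Kinf L \<tau>))" "0 \<le> real_of_ereal (Kinf L \<tau>)"
    by (cases "Kinf L \<tau>"; simp)+
qed

lemma adjoint_imp_pseudo_minimiser: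
  fixes \<tau> u :: "real \<Rightarrow> 'a::euclidean_space"
  assumes L: "0 < L" and \<beta>: "0 < b" "\<And>t. t \<in> {0..L} \<Longrightarrow> b \<le> \<beta> t \<and> \<beta> t \<le> A"
    and \<tau>: "W1inf L \<tau>" "sphere_valued L \<tau>" "constraintsC L \<beta> T1 T2 a \<tau>"
    and u: "W1inf L u" "\<exists>t\<in>{0..L}. u t \<noteq> 0"
    and eqs: "AE t in lborel. t \<in> {0<..<L} \<longrightarrow> u differentiable (at t) \<and> \<tau> differentiable (at t) \<and>
          vector_derivative u (at t) + (u t \<bullet> vector_derivative \<tau> (at t)) *\<^sub>R \<tau> t
            = \<beta> t *\<^sub>R (lam - (lam \<bullet> \<tau> t) *\<^sub>R \<tau> t) \<and>
          norm (u t) *\<^sub>R vector_derivative \<tau> (at t) = real_of_ereal (Kinf L \<tau>) *\<^sub>R u t"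
  shows "pseudo_minimiser L \<beta> T1 T2 a \<tau> \<and>
    ((\<forall>t\<in>{0..L}. real_of_ereal (Kinf L \<tau>) * norm (u t) + \<beta> t * (lam \<bullet> \<tau> t) \<le> 0) \<longrightarrow>
      (\<forall>\<tau>'. W1inf L \<tau>' \<and> sphere_valued L \<tau>' \<and> constraintsC L \<beta> T1 T2 a \<tau>' \<longrightarrow> Kinf L \<tau> \<le> Kinf L \<tau>'))"
proof -
  define k where "k = real_of_ereal (Kinf L \<tau>)"
  define Iu where "Iu = integral {0..L} (\<lambda>t. norm (u t))"
  define J where "J \<sigma> = integral {0..L} (\<lambda>t. \<beta> t * (norm (\<sigma> t - \<tau> t))\<^sup>2)" for \<sigma>
  obtain Mu where lip_u: "Mu-lipschitz_on {0..L} u" using u(1) by (auto simp: W1inf_def)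
  obtain Ub where Ub: "\<And>t. t \<in> {0..L} \<Longrightarrow> norm (u t) \<le> Ub"
    using lipschitz_on_interval_bounded[OF lip_u] by blast
  have k: "Kinf L \<tau> = ereal k" "0 \<le> k" using Kinf_real[OF L \<tau>(1)] by (simp_all add: k_def)
  obtain t0 where t0: "t0 \<in> {0..L}" "u t0 \<noteq> 0" using u(2) by blast
  have Iu: "0 < Iu"
    unfolding Iu_def by (rule integral_norm_pos[OF lipschitz_on_continuous_on[OF lip_u] L t0])
  have \<tau>1: "\<forall>t\<in>{0..L}. norm (\<tau> t) = 1" using \<tau>(2) by (simp add: sphere_valued_def)
  have \<beta>0: "0 \<le> \<beta> t \<and> \<beta> t \<le> A" if "t \<in> {0..L}" for t
    using \<beta>(1) \<beta>(2)[OF that] by linarith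
  have estimate: "Kinf L \<tau> \<le> Kinf L \<sigma> + ereal (c / (2 * Iu) * J \<sigma>)"
    if \<sigma>: "W1inf L \<sigma>" "sphere_valued L \<sigma>" "constraintsC L \<beta> T1 T2 a \<sigma>"
      and w: "\<forall>t\<in>{0..L}. \<beta> t * (lam \<bullet> \<tau> t) + k * norm (u t) \<le> c * \<beta> t" for \<sigma> c
  proof -
    obtain K where K: "Kinf L \<sigma> = ereal K" using Kinf_real[OF L \<sigma>(1)] by blast
    have "k * Iu \<le> c / 2 * J \<sigma> + K * Iu"
      using admissible_adjoint_estimate[OF L \<beta>0 \<tau> \<sigma> u(1) eqs[folded k_def] K w]
      unfolding Iu_def J_def .
    then have "k \<le> K + c / (2 * Iu) * J \<sigma>" using Iu by (simp add: field_simps)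
    then show ?thesis using k K by simp
  qed
  define c where "c = norm lam + k * Ub / b"
  have "\<beta> t * (lam \<bullet> \<tau> t) + k * norm (u t) \<le> c * \<beta> t" if t: "t \<in> {0..L}" for t
    unfolding c_def using \<beta>(1) \<beta>(2)[OF t] \<tau>1 t Ub[OF t] k(2) by (intro adjoint_weight_bound) auto
  then have "pseudo_minimiser L \<beta> T1 T2 a \<tau>"
    unfolding pseudo_minimiser_def using \<tau> estimate L Iu
    by (intro conjI exI[of _ "c * L / Iu"] allI impI) (auto simp: J_def field_simps)
  moreover have "Kinf L \<tau> \<le> Kinf L \<sigma>"
    if "\<forall>t\<in>{0..L}. k * norm (u t) + \<beta> t * (lam \<bullet> \<tau> t) \<le> 0"
      and "W1inf L \<sigma>" "sphere_valued L \<sigma>" "constraintsC L \<beta> T1 T2 a \<sigma>" for \<sigma>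
    using estimate[of \<sigma> 0] that by (simp add: add.commute)
  ultimately show ?thesis by (auto simp: k_def)
qed

theorem mainTheorem9:
  fixes \<alpha> :: "real \<Rightarrow> real" and ell :: real
    and a1 a2 T1 T2 :: "real ^ 'n"
    and \<tau> u :: "real \<Rightarrow> real ^ 'n" and lam :: "real ^ 'n"
  assumes n2: "CARD('n) \<ge> 2"
    and ell_pos: "ell > 0"
    and \<alpha>_pos: "\<forall>s\<in>{0..ell}. \<alpha> s > 0"
    and \<alpha>_bv: "bounded_variation_on \<alpha> 0 ell"
    and \<alpha>_inv_bdd: "\<exists>C. \<forall>s\<in>{0..ell}. 1 / \<alpha> s \<le> C"
    and T1: "norm T1 = 1" and T2: "norm T2 = 1"
    and \<tau>_W: "W1inf (Lpar \<alpha> ell) \<tau>"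
    and \<tau>_S: "sphere_valued (Lpar \<alpha> ell) \<tau>"
    and \<tau>_C: "constraintsC (Lpar \<alpha> ell) (beta \<alpha> ell) T1 T2 (a2 - a1) \<tau>"
    and u_W: "W1inf (Lpar \<alpha> ell) u"
    and u_nz: "\<exists>t\<in>{0..Lpar \<alpha> ell}. u t \<noteq> 0"
    and eqs: "AE t in lborel. t \<in> {0<..<Lpar \<alpha> ell} \<longrightarrow>
               u differentiable (at t) \<and> \<tau> differentiable (at t) \<and>
               vector_derivative u (at t) + (u t \<bullet> vector_derivative \<tau> (at t)) *\<^sub>R \<tau> t
                 = beta \<alpha> ell t *\<^sub>R (lam - (lam \<bullet> \<tau> t) *\<^sub>R \<tau> t) \<and>
               norm (u t) *\<^sub>R vector_derivative \<tau> (at t)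
                 = real_of_ereal (Kinf (Lpar \<alpha> ell) \<tau>) *\<^sub>R u t"
  shows "pseudo_minimiser (Lpar \<alpha> ell) (beta \<alpha> ell) T1 T2 (a2 - a1) \<tau>
    \<and> ((\<forall>t\<in>{0..Lpar \<alpha> ell}.
           real_of_ereal (Kinf (Lpar \<alpha> ell) \<tau>) * norm (u t) + beta \<alpha> ell t * (lam \<bullet> \<tau> t) \<le> 0)
        \<longrightarrow> (\<forall>\<tau>'. W1inf (Lpar \<alpha> ell) \<tau>' \<and> sphere_valued (Lpar \<alpha> ell) \<tau>'
                 \<and> constraintsC (Lpar \<alpha> ell) (beta \<alpha> ell) T1 T2 (a2 - a1) \<tau>'
                 \<longrightarrow> Kinf (Lpar \<alpha> ell) \<tau> \<le> Kinf (Lpar \<alpha> ell) \<tau>'))"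
proof -
  have "0 \<le> Lpar \<alpha> ell" using u_nz by auto
  show ?thesis
  proof (cases "Lpar \<alpha> ell = 0")
    case True
    then have "Kinf (Lpar \<alpha> ell) \<tau> = -\<infinity>" by (simp add: Kinf_nonpos_length)
    then show ?thesis using \<tau>_W \<tau>_S \<tau>_C by (simp add: pseudo_minimiser_def)
  next
    case False
    with \<open>0 \<le> Lpar \<alpha> ell\<close> have L: "0 < Lpar \<alpha> ell" by simp
    obtain b A where "0 < b" "\<And>t. t \<in> {0..Lpar \<alpha> ell} \<Longrightarrow> b \<le> beta \<alpha> ell t \<and> beta \<alpha> ell t \<le> A"
      using beta_bounds[OF _ \<alpha>_pos \<alpha>_bv \<alpha>_inv_bdd L] ell_pos by auto
    then show ?thesis by (rule adjoint_imp_pseudo_minimiser[OF L _ _ \<tau>_W \<tau>_S \<tau>_C u_W u_nz eqs])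
  qed
qed

end
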